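(* Let $z_0=0,z_1,\dots,z_s$ be distinct points of $\mathbb{D}$, let $d_0\ge0$ and $m_1,\dots,m_s\ge1$ be integers, and let $b(z)=z^{d_0}\prod_{j=1}^s\Big(\frac{z-z_j}{1-\overline{z_j}z}\Big)^{m_j}$. Let $B=f_0+f_1+\dots+f_s$ be $\mathcal{H}^2_{\omega}$-inner, where $f_0$ is a polynomial of degree $d_0$ and $f_j\in\mathcal{X}_{z_j}$ has degree $m_j-1$ for $1\le j\le s$ (an $\mathcal{H}^2_{\omega}$-analogue of $b$). Then $B/b$ (extended holomorphically across the zeros of $b$) belongs to $\mathcal{H}^2_{\omega}(|b|^2)$ and is a constant multiple of the reproducing kernel of $\mathcal{H}^2_{\omega}(|b|^2)$ at the origin.
   Context: Let $\omega=\{\omega_n\}_{n\geq 0}$ be a sequence of positive reals with $\omega_0=1$ and $\lim_{n\to\infty}\omega_{n+1}/\omega_n=1$. $\mathcal{H}^2_{\omega}$ is the Hilbert space of power series $f(z)=\sum_{n\ge0}a_nz^n$ with $\|f\|^2=\sum_{n\geq0}\omega_n|a_n|^2<\infty$ and inner product $\langle f,g\rangle=\sum_n\omega_na_n\overline{b_n}$; it is a reproducing kernel Hilbert space on the unit disk $\mathbb{D}$ with kernel $K_\lambda(z)=\sum_{n\ge0}\overline{\lambda}^nz^n/\omega_n$. For $\ell\ge0$, $K^{(\ell)}_\lambda(z)=\frac{\partial^\ell}{\partial\overline{\lambda}^\ell}K_\lambda(z)$; $\mathcal{X}_\lambda$ is the linear span of $\{K_\lambda,K^{(1)}_\lambda,\dots\}$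 and for $f=\sum_{j=0}^mc_jK^{(j)}_\lambda$ with $c_m\ne0$ the degree of $f$ is $m$. For a nonzero $b\in\mathcal{H}^2_{\omega}$, $\mathcal{H}^2_{\omega}(|b|^2)$ is the completion of the holomorphic polynomials under the norm $\|f\|_{\mathcal{H}^2_{\omega}(|b|^2)}=\|fb\|_{\mathcal{H}^2_{\omega}}$ (inner product $\langle f,g\rangle_{\mathcal{H}^2_{\omega}(|b|^2)}=\langle fb,gb\rangle_{\mathcal{H}^2_{\omega}}$); it is a reproducing kernel Hilbert space of holomorphic functions on $\mathbb{D}$. A function $f$ is $\mathcal{H}^2_{\omega}$-inner if $\|f\|=1$ and $\langle z^mf,f\rangle=0$ for all integers $m\geq1$. *)

theory Defs
  imports "HOL-Complex_Analysis.Complex_Analysis" "HOL-Computational_Algebra.Polynomial"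
begin

definition admissible_weight :: "(nat \<Rightarrow> real) \<Rightarrow> bool" where
  "admissible_weight \<omega> \<longleftrightarrow> (\<forall>n. \<omega> n > 0) \<and> \<omega> 0 = 1 \<and>
     ((\<lambda>n. \<omega> (Suc n) / \<omega> n) \<longlonglongrightarrow> 1)"

definition tcoef :: "(complex \<Rightarrow> complex) \<Rightarrow> nat \<Rightarrow> complex" where
  "tcoef f n = (deriv ^^ n) f 0 / fact n"

definition in_H2 :: "(nat \<Rightarrow> real) \<Rightarrow> (complex \<Rightarrow> complex) \<Rightarrow> bool" where
  "in_H2 \<omega> f \<longleftrightarrow> f holomorphic_on ball 0 1 \<and>
     summable (\<lambda>n. \<omega> n * (cmod (tcoef f n))\<^sup>2)"

definition H2_inner :: "(nat \<Rightarrow> real) \<Rightarrow> (complex \<Rightarrow> complex) \<Rightarrow> (complex \<Rightarrow> complex) \<Rightarrow> complex" where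
  "H2_inner \<omega> f g = (\<Sum>n. of_real (\<omega> n) * tcoef f n * cnj (tcoef g n))"

definition H2_norm :: "(nat \<Rightarrow> real) \<Rightarrow> (complex \<Rightarrow> complex) \<Rightarrow> real" where
  "H2_norm \<omega> f = sqrt (\<Sum>n. \<omega> n * (cmod (tcoef f n))\<^sup>2)"

definition H2_inner_fun :: "(nat \<Rightarrow> real) \<Rightarrow> (complex \<Rightarrow> complex) \<Rightarrow> bool" where
  "H2_inner_fun \<omega> f \<longleftrightarrow> in_H2 \<omega> f \<and> H2_norm \<omega> f = 1 \<and>
     (\<forall>m::nat. m \<ge> 1 \<longrightarrow> H2_inner \<omega> (\<lambda>z. z ^ m * f z) f = 0)"

text \<open>K^{(l)}_lambda(z) = d^l/d(conj lambda)^l of sum_n conj(lambda)^n z^n / omega_n,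
  differentiated termwise.\<close>
definition Kder :: "(nat \<Rightarrow> real) \<Rightarrow> complex \<Rightarrow> nat \<Rightarrow> complex \<Rightarrow> complex" where
  "Kder \<omega> lam l z = (\<Sum>n. if l \<le> n then
       fact n / fact (n - l) * cnj lam ^ (n - l) * z ^ n / of_real (\<omega> n) else 0)"

definition in_X_deg :: "(nat \<Rightarrow> real) \<Rightarrow> complex \<Rightarrow> (complex \<Rightarrow> complex) \<Rightarrow> nat \<Rightarrow> bool" where
  "in_X_deg \<omega> lam f d \<longleftrightarrow> (\<exists>c::nat \<Rightarrow> complex. c d \<noteq> 0 \<and>
      (\<forall>z. f z = (\<Sum>j\<le>d. c j * Kder \<omega> lam j z)))"

text \<open>H^2_omega(|b|^2): the completion of the polynomials under f \<mapsto> ||f b||, realised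
  as the holomorphic functions F on the disc such that F b is the H^2_omega-limit of
  p_k b for some sequence of polynomials p_k.\<close>
definition in_Hb :: "(nat \<Rightarrow> real) \<Rightarrow> (complex \<Rightarrow> complex) \<Rightarrow> (complex \<Rightarrow> complex) \<Rightarrow> bool" where
  "in_Hb \<omega> b F \<longleftrightarrow> F holomorphic_on ball 0 1 \<and> in_H2 \<omega> (\<lambda>z. F z * b z) \<and>
     (\<exists>p :: nat \<Rightarrow> complex poly.
        (\<forall>k. in_H2 \<omega> (\<lambda>z. poly (p k) z * b z - F z * b z)) \<and>
        ((\<lambda>k. H2_norm \<omega> (\<lambda>z. poly (p k) z * b z - F z * b z)) \<longlonglongrightarrow> 0))"

definition Hb_inner :: "(nat \<Rightarrow> real) \<Rightarrow> (complex \<Rightarrow> complex) \<Rightarrow> (complex \<Rightarrow> complex) \<Rightarrow> (complex \<Rightarrow> complex) \<Rightarrow> complex" where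
  "Hb_inner \<omega> b F G = H2_inner \<omega> (\<lambda>z. F z * b z) (\<lambda>z. G z * b z)"

definition is_Hb_kernel :: "(nat \<Rightarrow> real) \<Rightarrow> (complex \<Rightarrow> complex) \<Rightarrow> complex \<Rightarrow> (complex \<Rightarrow> complex) \<Rightarrow> bool" where
  "is_Hb_kernel \<omega> b w k \<longleftrightarrow> in_Hb \<omega> b k \<and> (\<forall>G. in_Hb \<omega> b G \<longrightarrow> Hb_inner \<omega> b G k = G w)"

end

theory Submission
  imports Defs
begin

text \<open>
  Since \<open>\<omega>\<^sub>n\<^sub>+\<^sub>1/\<omega>\<^sub>n \<rightarrow> 1\<close>, each kernel \<open>K\<^sup>(\<^sup>i\<^sup>)\<^sub>z\<^sub>j\<close> is holomorphic on a disc of radius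
  \<open>> 1\<close> and pairing with it evaluates \<open>u\<^sup>(\<^sup>i\<^sup>)(z\<^sub>j)\<close>. Hence for \<open>u\<close> holomorphic beyond the
  closed disc, \<open>\<langle>u, B\<rangle>\<close> only involves the first \<open>d\<^sub>0 + 1\<close> Taylor coefficients of \<open>u\<close> and the
  jets \<open>u\<^sup>(\<^sup>i\<^sup>)(z\<^sub>j)\<close>, \<open>i < m\<^sub>j\<close>. Testing the inner-function identities \<open>\<langle>q B, B\<rangle> = 0\<close>
  (\<open>q(0) = 0\<close>) against suitable polynomials \<open>q\<close> shows that \<open>B\<close> vanishes to order \<open>m\<^sub>j\<close> at
  \<open>z\<^sub>j\<close> and to order \<open>d\<^sub>0\<close> at \<open>0\<close>; so \<open>F = B/b\<close> is holomorphic beyond the closed disc and its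
  Taylor polynomials \<open>p\<^sub>k\<close> satisfy \<open>p\<^sub>k b \<rightarrow> F b\<close>, i.e. \<open>F \<in> H\<^sup>2\<^sub>\<omega>(|b|\<^sup>2)\<close>. The same
  description of \<open>\<langle>\<cdot>, B\<rangle>\<close> gives \<open>\<langle>p b, B\<rangle> = p(0) \<langle>b, B\<rangle>\<close> for polynomials \<open>p\<close>, hence by
  density \<open>\<langle>G, F\<rangle>\<^sub>b = \<langle>G b, B\<rangle> = G(0) \<langle>b, B\<rangle>\<close> for all \<open>G \<in> H\<^sup>2\<^sub>\<omega>(|b|\<^sup>2)\<close>. Taking
  \<open>G = F\<close> gives \<open>F(0) \<langle>b, B\<rangle> = \<parallel>B\<parallel>\<^sup>2 = 1\<close>, so \<open>F / conj \<langle>b, B\<rangle>\<close> is the reproducing kernel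
  at \<open>0\<close>.
\<close>

section \<open>Weights and Taylor coefficients\<close>

lemma admissible_weight_pos: "admissible_weight \<omega> \<Longrightarrow> \<omega> n > 0"
  by (simp add: admissible_weight_def)

lemma admissible_weight_le_geometric:
  assumes adm: "admissible_weight \<omega>" and \<rho>: "\<rho> > 1"
  obtains C where "C > 0" "\<And>n. \<omega> n \<le> C * \<rho> ^ n"
proof -
  note pos = admissible_weight_pos[OF adm]
  have "eventually (\<lambda>n. \<omega> (Suc n) / \<omega> n < \<rho>) sequentially"
    using adm \<rho> by (auto simp: admissible_weight_def intro: order_tendstoD(2))
  then obtain N where "\<And>n. n \<ge> N \<Longrightarrow> \<omega> (Suc n) / \<omega> n < \<rho>"
    by (auto simp: eventually_sequentially)
  then have N: "\<omega> (Suc n) \<le> \<rho> * \<omega> n" if "n \<ge> N" for n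
    using pos[of n] that by (simp add: divide_less_eq less_imp_le)
  have tail: "\<omega> n \<le> \<omega> N * \<rho> ^ (n - N)" if "n \<ge> N" for n
    using that
  proof (induction n rule: dec_induct)
    case (step n)
    have "\<omega> (Suc n) \<le> \<rho> * (\<omega> N * \<rho> ^ (n - N))"
      using N[OF step(1)] step(3) \<rho> by (smt (verit) mult_left_mono)
    then show ?case using step(1) by (simp add: Suc_diff_le mult.left_commute)
  qed simp
  define C where "C = (\<Sum>i\<le>N. \<omega> i)"
  have C: "C > 0" unfolding C_def using pos by (intro sum_pos) auto
  have "\<omega> n \<le> C * \<rho> ^ n" for n
  proof (cases "n \<ge> N")
    case True
    have "\<omega> n \<le> \<omega> N * \<rho> ^ n"
      using tail[OF True] pos[of N] \<rho> by (smt (verit) mult_left_mono power_increasing diff_le_self)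
    also have "\<dots> \<le> C * \<rho> ^ n"
      unfolding C_def using pos \<rho> by (intro mult_right_mono member_le_sum) (auto simp: less_imp_le)
    finally show ?thesis .
  next
    case False
    have "\<omega> n \<le> C" unfolding C_def using False pos by (intro member_le_sum) (auto simp: less_imp_le)
    also have "\<dots> \<le> C * \<rho> ^ n" using C \<rho> by simp
    finally show ?thesis .
  qed
  then show ?thesis using that C by blast
qed

lemma tcoef_cong:
  assumes "open S" "0 \<in> S" "\<And>z. z \<in> S \<Longrightarrow> f z = g z"
  shows "tcoef f n = tcoef g n"
proof -
  have "eventually (\<lambda>z. f z = g z) (nhds 0)"
    using eventually_nhds_in_open[OF assms(1,2)] by (rule eventually_mono) (use assms in auto)
  then show ?thesis unfolding tcoef_def by (simp add: higher_deriv_cong_ev)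
qed

lemma tcoef_add:
  assumes "f holomorphic_on S" "g holomorphic_on S" "open S" "0 \<in> S"
  shows "tcoef (\<lambda>z. f z + g z) n = tcoef f n + tcoef g n"
  unfolding tcoef_def using higher_deriv_add[OF assms] by (simp add: add_divide_distrib)

lemma tcoef_diff:
  assumes "f holomorphic_on S" "g holomorphic_on S" "open S" "0 \<in> S"
  shows "tcoef (\<lambda>z. f z - g z) n = tcoef f n - tcoef g n"
  unfolding tcoef_def using higher_deriv_diff[OF assms] by (simp add: diff_divide_distrib)

lemma tcoef_cmult:
  assumes "f holomorphic_on S" "open S" "0 \<in> S"
  shows "tcoef (\<lambda>z. c * f z) n = c * tcoef f n"
  unfolding tcoef_def using higher_deriv_cmult[OF assms(1,3,2)] by simp

lemma higher_deriv_sum: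
  fixes f :: "'i \<Rightarrow> complex \<Rightarrow> complex"
  assumes "finite I" "\<And>i. i \<in> I \<Longrightarrow> f i holomorphic_on S" "open S" "z \<in> S"
  shows "(deriv ^^ n) (\<lambda>w. \<Sum>i\<in>I. f i w) z = (\<Sum>i\<in>I. (deriv ^^ n) (f i) z)"
  using assms(1,2)
proof (induction I rule: finite_induct)
  case empty
  then show ?case by simp
next
  case (insert x F)
  have "(\<lambda>w. \<Sum>i\<in>F. f i w) holomorphic_on S"
    using insert by (intro holomorphic_on_sum) auto
  then have "(deriv ^^ n) (\<lambda>w. f x w + (\<Sum>i\<in>F. f i w)) z
      = (deriv ^^ n) (f x) z + (deriv ^^ n) (\<lambda>w. \<Sum>i\<in>F. f i w) z"
    by (intro higher_deriv_add assms(3,4)) (use insert assms(3,4) in auto)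
  then show ?case using insert by simp
qed

lemma tcoef_sum:
  fixes f :: "'i \<Rightarrow> complex \<Rightarrow> complex"
  assumes "finite I" "\<And>i. i \<in> I \<Longrightarrow> f i holomorphic_on S" "open S" "0 \<in> S"
  shows "tcoef (\<lambda>w. \<Sum>i\<in>I. f i w) n = (\<Sum>i\<in>I. tcoef (f i) n)"
  unfolding tcoef_def using higher_deriv_sum[OF assms] by (simp add: sum_divide_distrib)

lemma tcoef_poly: "tcoef (poly p) n = coeff p n"
proof -
  have "eval_fps (fps_of_poly p) has_fps_expansion fps_of_poly p"
    by (rule eval_fps_has_fps_expansion) simp
  from fps_nth_fps_expansion[OF this, of n] show ?thesis
    unfolding tcoef_def by (simp add: eval_fps_of_poly[abs_def])
qed

lemma higher_deriv_power_mult: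
  assumes u: "u holomorphic_on S" and S: "open S" "a \<in> S"
    and g: "\<And>z. z \<in> S \<Longrightarrow> g z = (z - a) ^ k * u z" and l: "l \<le> k"
  shows "(deriv ^^ l) g a = (if l = k then fact k * u a else 0)"
proof -
  have "eventually (\<lambda>z. g z = (z - a) ^ k * u z) (nhds a)"
    using eventually_nhds_in_open[OF S] by (rule eventually_mono) (use g in auto)
  then have "(deriv ^^ l) g a = (deriv ^^ l) (\<lambda>z. (z - a) ^ k * u z) a"
    by (rule higher_deriv_cong_ev) simp
  also have "\<dots> = (\<Sum>i = 0..l. of_nat (l choose i) * (deriv ^^ i) (\<lambda>z. (z - a) ^ k) a * (deriv ^^ (l - i)) u a)"
    by (rule higher_deriv_mult[OF _ u S]) (intro holomorphic_intros)
  also have "\<dots> = (\<Sum>i = 0..l. of_nat (l choose i) *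
                    (pochhammer (of_nat (Suc k - i)) i * 0 ^ (k - i)) * (deriv ^^ (l - i)) u a)"
    by (simp add: higher_deriv_power)
  also have "\<dots> = (if l = k then fact k * u a else 0)"
  proof (cases "l = k")
    case True
    then have "(\<Sum>i = 0..l. of_nat (l choose i) * (pochhammer (of_nat (Suc k - i)) i * 0 ^ (k - i))
                 * (deriv ^^ (l - i)) u a)
             = (\<Sum>i\<in>{k}. of_nat (l choose i) * (pochhammer (of_nat (Suc k - i)) i * 0 ^ (k - i))
                 * (deriv ^^ (l - i)) u a)"
      by (intro sum.mono_neutral_right) auto
    then show ?thesis using True by (simp add: pochhammer_fact)
  qed (use l in \<open>auto intro!: sum.neutral\<close>)
  finally show ?thesis .
qed

lemma tcoef_power_mult:
  assumes "u holomorphic_on S" "open S" "0 \<in> S" "\<And>z. z \<in> S \<Longrightarrow> g z = z ^ k * u z" "l \<le> k"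
  shows "tcoef g l = (if l = k then u 0 else 0)"
  using higher_deriv_power_mult[of u S 0 g k l] assms by (simp add: tcoef_def)

lemma norm_tcoef_le_Cauchy:
  assumes f: "f holomorphic_on ball 0 R" and r: "0 < r" "r < R"
    and M: "\<And>z. cmod z = r \<Longrightarrow> cmod (f z) \<le> M"
  shows "cmod (tcoef f n) \<le> M / r ^ n"
proof -
  have sub: "cball 0 r \<subseteq> ball (0::complex) R" using r by (simp add: cball_subset_ball_iff)
  have "cmod ((deriv ^^ n) f 0) \<le> fact n * M / r ^ n"
  proof (rule Cauchy_inequality)
    show "f holomorphic_on ball 0 r"
      using f sub ball_subset_cball by (meson holomorphic_on_subset order_trans)
    show "continuous_on (cball 0 r) f"
      using holomorphic_on_subset[OF f sub] by (rule holomorphic_on_imp_continuous_on)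
  qed (use r M in auto)
  then show ?thesis unfolding tcoef_def by (simp add: norm_divide field_simps)
qed

lemma holomorphic_bounded_on_cball:
  assumes "f holomorphic_on ball 0 R" "r < R"
  obtains M where "\<And>z. cmod z \<le> r \<Longrightarrow> cmod (f z) \<le> M"
proof -
  have sub: "cball 0 r \<subseteq> ball (0::complex) R" using assms(2) by (simp add: cball_subset_ball_iff)
  have "compact (f ` cball 0 r)"
    using holomorphic_on_subset[OF assms(1) sub]
    by (intro compact_continuous_image holomorphic_on_imp_continuous_on) auto
  then obtain M where "\<forall>x\<in>f ` cball 0 r. norm x \<le> M"
    by (meson bounded_iff compact_imp_bounded)
  then show ?thesis using that by (metis dist_0_norm image_eqI mem_cball)
qed

lemma tcoef_geometric_decay:
  assumes "f holomorphic_on ball 0 R" "R > 1"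
  obtains r M where "r > 1" "\<forall>n. cmod (tcoef f n) \<le> M / r ^ n"
proof -
  define r where "r = (1 + R) / 2"
  have r: "1 < r" "r < R" using assms(2) by (auto simp: r_def)
  obtain M where "\<And>z. cmod z \<le> r \<Longrightarrow> cmod (f z) \<le> M"
    using holomorphic_bounded_on_cball[OF assms(1) r(2)] by blast
  then have "cmod (tcoef f n) \<le> M / r ^ n" for n
    by (intro norm_tcoef_le_Cauchy[OF assms(1)]) (use r in auto)
  then show ?thesis using that r(1) by blast
qed

section \<open>Functions holomorphic beyond the closed disc\<close>

lemma weighted_norm_sq_le_geometric:
  assumes adm: "admissible_weight \<omega>" and r: "r > 1"
  shows "\<exists>K. \<forall>c M. (\<forall>n. cmod (c n) \<le> M / r ^ n) \<longrightarrow>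
    summable (\<lambda>n. \<omega> n * cmod (c n)^2) \<and> (\<Sum>n. \<omega> n * cmod (c n)^2) \<le> M^2 * K"
proof -
  define \<rho> where "\<rho> = (1 + r) / 2"
  have \<rho>: "1 < \<rho>" "\<rho> < r" using r by (auto simp: \<rho>_def)
  obtain C where C: "C > 0" "\<And>n. \<omega> n \<le> C * \<rho> ^ n"
    using admissible_weight_le_geometric[OF adm \<rho>(1)] by blast
  define q where "q = \<rho> / r^2"
  have q: "0 < q" "q < 1"
    using \<rho> r by (auto simp: q_def power2_eq_square less_le_trans[of \<rho> r "r * r"])
  have geom: "summable (\<lambda>n. q ^ n)" using q by (intro summable_geometric) auto
  define K where "K = C * (\<Sum>n. q ^ n)"
  have "summable (\<lambda>n. \<omega> n * cmod (c n)^2) \<and> (\<Sum>n. \<omega> n * cmod (c n)^2) \<le> M^2 * K"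
    if c: "\<forall>n. cmod (c n) \<le> M / r ^ n" for c M
  proof -
    have le: "\<omega> n * cmod (c n)^2 \<le> M^2 * C * q ^ n" for n
    proof -
      have "cmod (c n)^2 \<le> (M / r ^ n)^2" using c by (intro power_mono) auto
      then have "\<omega> n * cmod (c n)^2 \<le> (C * \<rho> ^ n) * (M / r ^ n)^2"
        using C(2)[of n] admissible_weight_pos[OF adm, of n] by (intro mult_mono) auto
      also have "\<dots> = M^2 * C * q ^ n"
        by (simp add: q_def power_divide power_mult_distrib mult.commute flip: power_mult)
      finally show ?thesis .
    qed
    have bound: "summable (\<lambda>n. M^2 * C * q ^ n)" using geom by (intro summable_mult)
    have summ: "summable (\<lambda>n. \<omega> n * cmod (c n)^2)"
      by (rule summable_comparison_test'[OF bound, of 0]) (use le admissible_weight_pos[OF adm] in \<open>simp add: less_imp_le\<close>)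
    have "(\<Sum>n. \<omega> n * cmod (c n)^2) \<le> (\<Sum>n. M^2 * C * q ^ n)" by (rule suminf_le[OF le summ bound])
    also have "\<dots> = M^2 * K" unfolding K_def using suminf_mult[OF geom, of "M^2 * C"] by simp
    finally show ?thesis using summ by simp
  qed
  then show ?thesis by blast
qed

lemma summable_weighted_norm_geometric:
  assumes adm: "admissible_weight \<omega>" and r: "r > 1" and c: "\<And>n. cmod (c n) \<le> M / r ^ n"
  shows "summable (\<lambda>n. (1 + \<omega> n) * cmod (c n))"
proof -
  define \<rho> where "\<rho> = (1 + r) / 2"
  have \<rho>: "1 < \<rho>" "\<rho> < r" using r by (auto simp: \<rho>_def)
  obtain C where C: "C > 0" "\<And>n. \<omega> n \<le> C * \<rho> ^ n"
    using admissible_weight_le_geometric[OF adm \<rho>(1)] by blast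
  have "(1 + \<omega> n) * cmod (c n) \<le> (1 + C * \<rho> ^ n) * (M / r ^ n)" for n
    using C(2)[of n] c[of n] admissible_weight_pos[OF adm, of n] by (intro mult_mono) auto
  also have "(1 + C * \<rho> ^ n) * (M / r ^ n) = M * (1 / r) ^ n + M * C * (\<rho> / r) ^ n" for n
    by (simp add: power_divide add_divide_distrib algebra_simps)
  finally have le: "(1 + \<omega> n) * cmod (c n) \<le> M * (1 / r) ^ n + M * C * (\<rho> / r) ^ n" for n .
  have "summable (\<lambda>n. M * (1 / r) ^ n + M * C * (\<rho> / r) ^ n)"
    using r \<rho> by (intro summable_add summable_mult summable_geometric) auto
  then show ?thesis
    by (rule summable_comparison_test'[of _ 0]) (use le admissible_weight_pos[OF adm] in \<open>simp add: less_imp_le\<close>)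
qed

lemma holomorphic_ball_summable_tcoef:
  assumes adm: "admissible_weight \<omega>" and f: "f holomorphic_on ball 0 R" and R: "R > 1"
  shows "summable (\<lambda>n. \<omega> n * cmod (tcoef f n)^2)" "summable (\<lambda>n. (1 + \<omega> n) * cmod (tcoef f n))"
proof -
  obtain r M where r: "r > 1" and M: "\<forall>n. cmod (tcoef f n) \<le> M / r ^ n"
    using tcoef_geometric_decay[OF f R] by blast
  obtain K where K: "\<And>c M. \<forall>n. cmod (c n) \<le> M / r ^ n \<Longrightarrow>
      summable (\<lambda>n. \<omega> n * cmod (c n)^2) \<and> (\<Sum>n. \<omega> n * cmod (c n)^2) \<le> M^2 * K"
    using weighted_norm_sq_le_geometric[OF adm r] by blast
  show "summable (\<lambda>n. \<omega> n * cmod (tcoef f n)^2)"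
    using K M by blast
  show "summable (\<lambda>n. (1 + \<omega> n) * cmod (tcoef f n))"
    using summable_weighted_norm_geometric[OF adm r] M by blast
qed

lemma in_H2_holomorphic_ball:
  assumes adm: "admissible_weight \<omega>" and f: "f holomorphic_on ball 0 R" and R: "R > 1"
  shows "in_H2 \<omega> f"
proof -
  have "ball 0 1 \<subseteq> ball (0::complex) R" using R by (intro subset_ball) auto
  then show ?thesis
    unfolding in_H2_def using holomorphic_on_subset[OF f] holomorphic_ball_summable_tcoef(1)[OF assms] by blast
qed

lemma H2_norm_tendsto_0_uniform:
  assumes adm: "admissible_weight \<omega>" and g: "\<And>k. g k holomorphic_on ball 0 R"
    and r: "1 < r" "r < R" and bound: "\<And>k z. cmod z = r \<Longrightarrow> cmod (g k z) \<le> E k"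
    and E: "E \<longlonglongrightarrow> 0"
  shows "(\<lambda>k. H2_norm \<omega> (g k)) \<longlonglongrightarrow> 0"
proof -
  obtain K where K: "\<And>c M. \<forall>n. cmod (c n) \<le> M / r ^ n \<Longrightarrow>
      summable (\<lambda>n. \<omega> n * cmod (c n)^2) \<and> (\<Sum>n. \<omega> n * cmod (c n)^2) \<le> M^2 * K"
    using weighted_norm_sq_le_geometric[OF adm r(1)] by blast
  have "cmod (tcoef (g k) n) \<le> E k / r ^ n" for k n
    by (rule norm_tcoef_le_Cauchy[OF g]) (use r bound in auto)
  then have sq: "summable (\<lambda>n. \<omega> n * cmod (tcoef (g k) n)^2)"
      "(\<Sum>n. \<omega> n * cmod (tcoef (g k) n)^2) \<le> (E k)^2 * K" for k
    using K[of "tcoef (g k)" "E k"] by auto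
  have lower: "0 \<le> H2_norm \<omega> (g k)" for k
    unfolding H2_norm_def using sq(1) admissible_weight_pos[OF adm]
    by (simp add: suminf_nonneg less_imp_le)
  have upper: "H2_norm \<omega> (g k) \<le> sqrt ((E k)^2 * K)" for k
    unfolding H2_norm_def using sq(2) by (rule real_sqrt_le_mono)
  have lim: "(\<lambda>k. sqrt ((E k)^2 * K)) \<longlonglongrightarrow> 0"
    using tendsto_real_sqrt[OF tendsto_mult[OF tendsto_power[OF E, of 2] tendsto_const[of K]]] by simp
  show ?thesis
  proof (rule tendsto_sandwich[OF _ _ tendsto_const lim])
    show "\<forall>\<^sub>F k in sequentially. 0 \<le> H2_norm \<omega> (g k)" using lower by simp
    show "\<forall>\<^sub>F k in sequentially. H2_norm \<omega> (g k) \<le> sqrt ((E k)^2 * K)" using upper by simp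
  qed
qed

lemma Taylor_poly_uniform_approx:
  assumes F: "F holomorphic_on ball 0 R" and r: "0 < r" "r < R"
  obtains E where "E \<longlonglongrightarrow> 0"
    "\<And>k z. cmod z \<le> r \<Longrightarrow> cmod (poly (\<Sum>n\<le>k. monom (tcoef F n) n) z - F z) \<le> E k"
proof -
  define r' where "r' = (r + R) / 2"
  have r': "r < r'" "r' < R" using r by (auto simp: r'_def)
  obtain M where M: "\<And>z. cmod z \<le> r' \<Longrightarrow> cmod (F z) \<le> M"
    using holomorphic_bounded_on_cball[OF F r'(2)] by blast
  have "cmod (F 0) \<le> M" using M[of 0] r r' by simp
  then have M0: "M \<ge> 0" using norm_ge_zero order_trans by blast
  have coeff: "cmod (tcoef F n) \<le> M / r' ^ n" for n
    by (rule norm_tcoef_le_Cauchy[OF F]) (use r r' M in auto)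
  define \<theta> where "\<theta> = r / r'"
  have \<theta>: "0 < \<theta>" "\<theta> < 1" using r r' by (auto simp: \<theta>_def)
  define E where "E k = M * \<theta> ^ Suc k / (1 - \<theta>)" for k
  have "cmod (poly (\<Sum>n\<le>k. monom (tcoef F n) n) z - F z) \<le> E k" if z: "cmod z \<le> r" for z k
  proof -
    let ?t = "\<lambda>n. tcoef F n * z ^ n"
    have "(\<lambda>n. (deriv ^^ n) F 0 / fact n * (z - 0) ^ n) sums F z"
      by (rule holomorphic_power_series[OF F]) (use z r in auto)
    then have "?t sums F z" by (simp add: tcoef_def)
    then have tail: "(\<lambda>i. ?t (i + Suc k)) sums (F z - (\<Sum>i<Suc k. ?t i))"
      by (subst sums_iff_shift) simp
    have "norm (?t (i + Suc k)) \<le> M * \<theta> ^ (i + Suc k)" for i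
    proof -
      have "norm (?t (i + Suc k)) \<le> (M / r' ^ (i + Suc k)) * r ^ (i + Suc k)"
        unfolding norm_mult norm_power by (intro mult_mono coeff power_mono z) (use M0 r' r in auto)
      then show ?thesis by (simp add: \<theta>_def power_divide)
    qed
    moreover have geom: "(\<lambda>i. M * \<theta> ^ (i + Suc k)) sums E k"
      using sums_mult[OF geometric_sums[of \<theta>], of "M * \<theta> ^ Suc k"] \<theta>
      by (simp add: E_def power_add algebra_simps)
    ultimately have "norm (\<Sum>i. ?t (i + Suc k)) \<le> (\<Sum>i. M * \<theta> ^ (i + Suc k))"
      by (intro norm_suminf_le sums_summable[OF geom])
    then have "cmod (F z - (\<Sum>i<Suc k. ?t i)) \<le> E k"
      unfolding sums_unique[OF tail, symmetric] sums_unique[OF geom, symmetric] .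
    moreover have "poly (\<Sum>n\<le>k. monom (tcoef F n) n) z = (\<Sum>i<Suc k. ?t i)"
      by (simp add: poly_sum poly_monom lessThan_Suc_atMost)
    ultimately show ?thesis by (simp add: norm_minus_commute)
  qed
  moreover have "E \<longlonglongrightarrow> 0"
    unfolding E_def using \<theta> by (intro tendsto_divide_zero tendsto_mult_right_zero) (auto intro: LIMSEQ_realpow_zero)
  ultimately show ?thesis using that by blast
qed

section \<open>The kernels \<open>K\<^sup>(\<^sup>l\<^sup>)\<^sub>\<lambda>\<close>\<close>

definition Kder_coeff :: "(nat \<Rightarrow> real) \<Rightarrow> complex \<Rightarrow> nat \<Rightarrow> nat \<Rightarrow> complex" where
  "Kder_coeff \<omega> lam l n =
     (if l \<le> n then fact n / fact (n - l) * cnj lam ^ (n - l) / of_real (\<omega> n) else 0)"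

lemma Kder_eq_eval_fps: "Kder \<omega> lam l = eval_fps (Abs_fps (Kder_coeff \<omega> lam l))"
proof
  fix z
  have "(\<lambda>n. if l \<le> n then fact n / fact (n - l) * cnj lam ^ (n - l) * z ^ n / of_real (\<omega> n) else 0)
      = (\<lambda>n. Kder_coeff \<omega> lam l n * z ^ n)"
    by (simp add: Kder_coeff_def fun_eq_iff)
  then show "Kder \<omega> lam l z = eval_fps (Abs_fps (Kder_coeff \<omega> lam l)) z"
    unfolding Kder_def eval_fps_def by simp
qed

lemma norm_Kder_coeff_ratio:
  assumes pos: "\<And>n. \<omega> n > 0" and lam: "lam \<noteq> 0" and n: "l \<le> n"
  shows "norm (Kder_coeff \<omega> lam l n) / norm (Kder_coeff \<omega> lam l (Suc n)) =
         (real n + 1 - real l) / (real n + 1) * (\<omega> (Suc n) / \<omega> n) / cmod lam"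
proof -
  obtain k where k: "n = l + k" using n le_Suc_ex by blast
  have p: "fact k > (0::real)" "cmod lam > 0" "\<omega> n > 0" "\<omega> (Suc n) > 0"
    using lam pos by auto
  have a: "norm (Kder_coeff \<omega> lam l n) = fact n / fact k * cmod lam ^ k / \<omega> n"
    using k p by (simp add: Kder_coeff_def norm_mult norm_divide norm_power)
  have "norm (Kder_coeff \<omega> lam l (Suc n)) =
      fact (Suc n) / fact (Suc k) * cmod lam ^ Suc k / \<omega> (Suc n)"
    using k p by (simp add: Kder_coeff_def norm_mult norm_divide norm_power Suc_diff_le del: fact_Suc)
  also have "\<dots> = (real n + 1) * fact n / ((real k + 1) * fact k) * (cmod lam * cmod lam ^ k) / \<omega> (Suc n)"
    by (simp add: fact_Suc algebra_simps)
  finally have b: "norm (Kder_coeff \<omega> lam l (Suc n)) = \<dots>" .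
  have aux: "(Fn / Fk * ck / w) / (N * Fn / (K * Fk) * (c * ck) / w') = K / N * (w' / w) / c"
    if "Fn \<noteq> 0" "Fk \<noteq> 0" "ck \<noteq> 0" "w \<noteq> 0" "w' \<noteq> 0" "c \<noteq> 0" "N \<noteq> 0" "K \<noteq> 0"
    for Fn Fk ck w w' c N K :: real
    using that by (simp add: field_simps)
  have "real n + 1 - real l = real k + 1" using k by simp
  then show ?thesis unfolding a b by (simp only:) (rule aux, use p in auto)
qed

lemma fps_conv_radius_Kder:
  assumes adm: "admissible_weight \<omega>" and lam: "lam \<noteq> 0"
  shows "fps_conv_radius (Abs_fps (Kder_coeff \<omega> lam l)) = ereal (1 / cmod lam)"
proof -
  have "(\<lambda>n. (real n + 1 - real l) / (real n + 1)) \<longlonglongrightarrow> 1" by real_asymp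
  then have "(\<lambda>n. (real n + 1 - real l) / (real n + 1) * (\<omega> (Suc n) / \<omega> n) / cmod lam)
      \<longlonglongrightarrow> 1 * 1 / cmod lam"
    using adm lam by (intro tendsto_intros) (auto simp: admissible_weight_def)
  then have "(\<lambda>n. (real n + 1 - real l) / (real n + 1) * (\<omega> (Suc n) / \<omega> n) / cmod lam)
      \<longlonglongrightarrow> 1 / cmod lam"
    by simp
  then have "(\<lambda>n. norm (Kder_coeff \<omega> lam l n) / norm (Kder_coeff \<omega> lam l (Suc n))) \<longlonglongrightarrow> 1 / cmod lam"
  proof (rule Lim_transform_eventually)
    show "\<forall>\<^sub>F n in sequentially. (real n + 1 - real l) / (real n + 1) * (\<omega> (Suc n) / \<omega> n) / cmod lam =
         norm (Kder_coeff \<omega> lam l n) / norm (Kder_coeff \<omega> lam l (Suc n))"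
      using eventually_ge_at_top[of l]
      by eventually_elim (simp add: norm_Kder_coeff_ratio[OF admissible_weight_pos[OF adm] lam])
  qed
  then have "conv_radius (Kder_coeff \<omega> lam l) = ereal (1 / cmod lam)"
    by (intro conv_radius_ratio_limit_nonzero[OF refl]) (use lam in auto)
  then show ?thesis by (simp add: fps_conv_radius_def)
qed

lemma holomorphic_on_Kder:
  assumes "admissible_weight \<omega>" "lam \<noteq> 0"
  shows "Kder \<omega> lam l holomorphic_on ball 0 (1 / cmod lam)"
  unfolding Kder_eq_eval_fps
  by (rule holomorphic_on_eval_fps) (simp add: fps_conv_radius_Kder[OF assms])

lemma tcoef_Kder:
  assumes "admissible_weight \<omega>" "lam \<noteq> 0"
  shows "tcoef (Kder \<omega> lam l) n = Kder_coeff \<omega> lam l n"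
proof -
  have "fps_conv_radius (Abs_fps (Kder_coeff \<omega> lam l)) > 0"
    using fps_conv_radius_Kder[OF assms] assms(2) by simp
  then have "eval_fps (Abs_fps (Kder_coeff \<omega> lam l)) has_fps_expansion Abs_fps (Kder_coeff \<omega> lam l)"
    by (rule eval_fps_has_fps_expansion)
  from fps_nth_fps_expansion[OF this, of n] show ?thesis
    unfolding tcoef_def Kder_eq_eval_fps by simp
qed

lemma higher_deriv_sums_tcoef:
  assumes "u holomorphic_on ball 0 R" "cmod w < R"
  shows "(\<lambda>n. tcoef u (n + l) * (fact (n + l) / fact n) * w ^ n) sums (deriv ^^ l) u w"
proof -
  have "(deriv ^^ l) u holomorphic_on ball 0 R"
    by (rule holomorphic_higher_deriv[OF assms(1)]) auto
  then have "(\<lambda>n. (deriv ^^ n) ((deriv ^^ l) u) 0 / fact n * (w - 0) ^ n) sums (deriv ^^ l) u w"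
    by (rule holomorphic_power_series) (use assms(2) in auto)
  then show ?thesis by (simp add: tcoef_def funpow_add)
qed

lemma Kder_reproducing:
  assumes u: "u holomorphic_on ball 0 R" "cmod lam < R" and pos: "\<And>n. \<omega> n > 0"
  shows "(\<lambda>n. of_real (\<omega> n) * tcoef u n * cnj (Kder_coeff \<omega> lam l n)) sums (deriv ^^ l) u lam"
proof -
  let ?g = "\<lambda>n. of_real (\<omega> n) * tcoef u n * cnj (Kder_coeff \<omega> lam l n)"
  have "?g (i + l) = tcoef u (i + l) * (fact (i + l) / fact i) * lam ^ i" for i
    using pos[of "i + l"] by (simp add: Kder_coeff_def field_simps)
  then have "(\<lambda>i. ?g (i + l)) sums (deriv ^^ l) u lam"
    using higher_deriv_sums_tcoef[OF u, of l] by simp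
  moreover have "(\<Sum>i<l. ?g i) = 0" by (simp add: Kder_coeff_def)
  ultimately show ?thesis using sums_iff_shift[of ?g l] by simp
qed

section \<open>The weighted inner product\<close>

lemma summable_weighted_inner:
  assumes w: "\<And>n. \<omega> n \<ge> 0"
    and a: "summable (\<lambda>n. \<omega> n * cmod (a n)^2)" and c: "summable (\<lambda>n. \<omega> n * cmod (c n)^2)"
  shows "summable (\<lambda>n. of_real (\<omega> n) * a n * cnj (c n))"
proof (rule summable_norm_cancel, rule summable_comparison_test'[where N = 0])
  show "summable (\<lambda>n. \<omega> n * cmod (a n)^2 + \<omega> n * cmod (c n)^2)" using a c by (rule summable_add)
next
  fix n
  have "cmod (a n) * cmod (c n) \<le> cmod (a n)^2 + cmod (c n)^2"
    by (smt (verit) mult_left_mono norm_ge_zero power2_eq_square zero_le_square mult_right_mono)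
  then have "\<omega> n * (cmod (a n) * cmod (c n)) \<le> \<omega> n * (cmod (a n)^2 + cmod (c n)^2)"
    using w[of n] by (rule mult_left_mono)
  then show "norm (norm (of_real (\<omega> n) * a n * cnj (c n))) \<le> \<omega> n * cmod (a n)^2 + \<omega> n * cmod (c n)^2"
    using w[of n] by (simp add: norm_mult algebra_simps)
qed

lemma H2_inner_sums:
  assumes "admissible_weight \<omega>" "in_H2 \<omega> f" "in_H2 \<omega> g"
  shows "(\<lambda>n. of_real (\<omega> n) * tcoef f n * cnj (tcoef g n)) sums H2_inner \<omega> f g"
  unfolding H2_inner_def
  using assms admissible_weight_pos[OF assms(1)]
  by (intro summable_sums summable_weighted_inner) (auto simp: in_H2_def less_imp_le)

lemma H2_inner_cong:
  assumes "\<And>z. z \<in> ball 0 1 \<Longrightarrow> f z = f' z" "\<And>z. z \<in> ball 0 1 \<Longrightarrow> g z = g' z"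
  shows "H2_inner \<omega> f g = H2_inner \<omega> f' g'"
  unfolding H2_inner_def using tcoef_cong[of "ball 0 1" f f'] tcoef_cong[of "ball 0 1" g g'] assms
  by simp

lemma H2_inner_add_left:
  assumes adm: "admissible_weight \<omega>" and f: "in_H2 \<omega> f" and g: "in_H2 \<omega> g" and h: "in_H2 \<omega> h"
  shows "H2_inner \<omega> (\<lambda>z. f z + g z) h = H2_inner \<omega> f h + H2_inner \<omega> g h"
proof -
  have tc: "tcoef (\<lambda>z. f z + g z) n = tcoef f n + tcoef g n" for n
    using f g by (intro tcoef_add[of _ "ball 0 1"]) (auto simp: in_H2_def)
  have "(\<lambda>n. of_real (\<omega> n) * tcoef (\<lambda>z. f z + g z) n * cnj (tcoef h n))
      sums (H2_inner \<omega> f h + H2_inner \<omega> g h)"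
    unfolding tc using sums_add[OF H2_inner_sums[OF adm f h] H2_inner_sums[OF adm g h]] by (simp add: algebra_simps)
  then show ?thesis by (simp add: H2_inner_def[of _ "\<lambda>z. f z + g z"] sums_iff)
qed

lemma H2_inner_diff_left:
  assumes adm: "admissible_weight \<omega>" and f: "in_H2 \<omega> f" and g: "in_H2 \<omega> g" and h: "in_H2 \<omega> h"
  shows "H2_inner \<omega> (\<lambda>z. f z - g z) h = H2_inner \<omega> f h - H2_inner \<omega> g h"
proof -
  have tc: "tcoef (\<lambda>z. f z - g z) n = tcoef f n - tcoef g n" for n
    using f g by (intro tcoef_diff[of _ "ball 0 1"]) (auto simp: in_H2_def)
  have "(\<lambda>n. of_real (\<omega> n) * tcoef (\<lambda>z. f z - g z) n * cnj (tcoef h n))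
      sums (H2_inner \<omega> f h - H2_inner \<omega> g h)"
    unfolding tc using sums_diff[OF H2_inner_sums[OF adm f h] H2_inner_sums[OF adm g h]] by (simp add: algebra_simps)
  then show ?thesis by (simp add: H2_inner_def[of _ "\<lambda>z. f z - g z"] sums_iff)
qed

lemma H2_inner_cmult_left:
  assumes adm: "admissible_weight \<omega>" and f: "in_H2 \<omega> f" and h: "in_H2 \<omega> h"
  shows "H2_inner \<omega> (\<lambda>z. c * f z) h = c * H2_inner \<omega> f h"
proof -
  have tc: "tcoef (\<lambda>z. c * f z) n = c * tcoef f n" for n
    using f by (intro tcoef_cmult[of _ "ball 0 1"]) (auto simp: in_H2_def)
  have "(\<lambda>n. of_real (\<omega> n) * tcoef (\<lambda>z. c * f z) n * cnj (tcoef h n)) sums (c * H2_inner \<omega> f h)"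
    unfolding tc using sums_mult[OF H2_inner_sums[OF adm f h], of c] by (simp add: algebra_simps)
  then show ?thesis by (simp add: H2_inner_def[of _ "\<lambda>z. c * f z"] sums_iff)
qed

lemma H2_inner_cmult_right:
  assumes adm: "admissible_weight \<omega>" and f: "in_H2 \<omega> f" and h: "in_H2 \<omega> h"
  shows "H2_inner \<omega> f (\<lambda>z. c * h z) = cnj c * H2_inner \<omega> f h"
proof -
  have tc: "tcoef (\<lambda>z. c * h z) n = c * tcoef h n" for n
    using h by (intro tcoef_cmult[of _ "ball 0 1"]) (auto simp: in_H2_def)
  have "(\<lambda>n. of_real (\<omega> n) * tcoef f n * cnj (tcoef (\<lambda>z. c * h z) n)) sums (cnj c * H2_inner \<omega> f h)"
    unfolding tc using sums_mult[OF H2_inner_sums[OF adm f h], of "cnj c"] by (simp add: algebra_simps)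
  then show ?thesis by (simp add: H2_inner_def[of _ _ "\<lambda>z. c * h z"] sums_iff)
qed

lemma H2_inner_add_right:
  assumes adm: "admissible_weight \<omega>" and f: "in_H2 \<omega> f" and g: "in_H2 \<omega> g" and h: "in_H2 \<omega> h"
  shows "H2_inner \<omega> f (\<lambda>z. g z + h z) = H2_inner \<omega> f g + H2_inner \<omega> f h"
proof -
  have tc: "tcoef (\<lambda>z. g z + h z) n = tcoef g n + tcoef h n" for n
    using g h by (intro tcoef_add[of _ "ball 0 1"]) (auto simp: in_H2_def)
  have "(\<lambda>n. of_real (\<omega> n) * tcoef f n * cnj (tcoef (\<lambda>z. g z + h z) n))
      sums (H2_inner \<omega> f g + H2_inner \<omega> f h)"
    unfolding tc using sums_add[OF H2_inner_sums[OF adm f g] H2_inner_sums[OF adm f h]] by (simp add: algebra_simps)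
  then show ?thesis by (simp add: H2_inner_def[of _ _ "\<lambda>z. g z + h z"] sums_iff)
qed

lemma H2_inner_sum_right:
  assumes adm: "admissible_weight \<omega>" and I: "finite I" and f: "in_H2 \<omega> f"
    and g: "\<And>i. i \<in> I \<Longrightarrow> in_H2 \<omega> (g i)"
  shows "H2_inner \<omega> f (\<lambda>z. \<Sum>i\<in>I. g i z) = (\<Sum>i\<in>I. H2_inner \<omega> f (g i))"
proof -
  have "tcoef (\<lambda>z. \<Sum>i\<in>I. g i z) n = (\<Sum>i\<in>I. tcoef (g i) n)" for n
    using I g by (intro tcoef_sum[of _ _ "ball 0 1"]) (auto simp: in_H2_def)
  then have "(\<lambda>n. of_real (\<omega> n) * tcoef f n * cnj (tcoef (\<lambda>z. \<Sum>i\<in>I. g i z) n))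
      = (\<lambda>n. \<Sum>i\<in>I. of_real (\<omega> n) * tcoef f n * cnj (tcoef (g i) n))"
    by (simp add: sum_distrib_left)
  moreover have "\<dots> sums (\<Sum>i\<in>I. H2_inner \<omega> f (g i))"
    by (intro sums_sum H2_inner_sums[OF adm f g])
  ultimately show ?thesis by (simp add: H2_inner_def[of _ _ "\<lambda>z. \<Sum>i\<in>I. g i z"] sums_iff)
qed

lemma H2_inner_self:
  assumes adm: "admissible_weight \<omega>" and f: "in_H2 \<omega> f"
  shows "H2_inner \<omega> f f = of_real (H2_norm \<omega> f ^ 2)"
proof -
  have sm: "summable (\<lambda>n. \<omega> n * cmod (tcoef f n)^2)" using f by (simp add: in_H2_def)
  have e: "(\<lambda>n. of_real (\<omega> n) * tcoef f n * cnj (tcoef f n)) = (\<lambda>n. of_real (\<omega> n * cmod (tcoef f n)^2))"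
    by (simp only: mult.assoc complex_norm_square of_real_mult)
  have "H2_inner \<omega> f f = (\<Sum>n. of_real (\<omega> n * cmod (tcoef f n)^2))"
    unfolding H2_inner_def e by (rule refl)
  also have "\<dots> = of_real (\<Sum>n. \<omega> n * cmod (tcoef f n)^2)"
    by (rule suminf_of_real[OF sm, symmetric])
  finally have "H2_inner \<omega> f f = of_real (\<Sum>n. \<omega> n * cmod (tcoef f n)^2)" .
  moreover have "(\<Sum>n. \<omega> n * cmod (tcoef f n)^2) \<ge> 0"
    using sm admissible_weight_pos[OF adm] by (simp add: suminf_nonneg less_imp_le)
  ultimately show ?thesis by (simp add: H2_norm_def)
qed

lemma H2_inner_poly_right:
  "H2_inner \<omega> f (poly p) = (\<Sum>n\<le>degree p. of_real (\<omega> n) * tcoef f n * cnj (coeff p n))"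
  unfolding H2_inner_def tcoef_poly by (rule sums_unique[symmetric], rule sums_finite) (auto simp: coeff_eq_0)

lemma sqrt_weight_norm_tcoef_le_H2_norm:
  assumes adm: "admissible_weight \<omega>" and f: "in_H2 \<omega> f"
  shows "sqrt (\<omega> n) * cmod (tcoef f n) \<le> H2_norm \<omega> f"
proof -
  have "\<omega> n * cmod (tcoef f n)^2 \<le> (\<Sum>i. \<omega> i * cmod (tcoef f i)^2)"
    using sum_le_suminf[of _ "{n}"] f admissible_weight_pos[OF adm]
    by (fastforce simp: in_H2_def less_imp_le)
  then show ?thesis
    unfolding H2_norm_def using real_sqrt_le_mono by (fastforce simp: real_sqrt_mult)
qed

lemma tcoef_tendsto_0:
  assumes adm: "admissible_weight \<omega>" and D: "\<And>k. in_H2 \<omega> (D k)"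
    and lim: "(\<lambda>k. H2_norm \<omega> (D k)) \<longlonglongrightarrow> 0"
  shows "(\<lambda>k. tcoef (D k) n) \<longlonglongrightarrow> 0"
proof (rule Lim_null_comparison)
  have w: "sqrt (\<omega> n) > 0" using admissible_weight_pos[OF adm] by simp
  show "\<forall>\<^sub>F k in sequentially. norm (tcoef (D k) n) \<le> H2_norm \<omega> (D k) / sqrt (\<omega> n)"
    using sqrt_weight_norm_tcoef_le_H2_norm[OF adm D] w by (simp add: field_simps mult.commute)
  show "(\<lambda>k. H2_norm \<omega> (D k) / sqrt (\<omega> n)) \<longlonglongrightarrow> 0"
    using tendsto_divide[OF lim tendsto_const, of "sqrt (\<omega> n)"] w by simp
qed

lemma sqrt_le_1_plus:
  assumes "x \<ge> 0" shows "sqrt x \<le> 1 + (x::real)"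
proof (cases "x \<le> 1")
  case True
  then show ?thesis using assms by (smt (verit) real_sqrt_le_1_iff)
next
  case False
  then have "sqrt x \<le> x" using real_sqrt_le_mono[of x "x * x"] assms by (simp add: mult_le_cancel_left1)
  then show ?thesis by linarith
qed

lemma H2_inner_tendsto_0_left:
  assumes adm: "admissible_weight \<omega>" and D: "\<And>k. in_H2 \<omega> (D k)"
    and lim: "(\<lambda>k. H2_norm \<omega> (D k)) \<longlonglongrightarrow> 0"
    and h: "summable (\<lambda>n. (1 + \<omega> n) * cmod (tcoef h n))"
  shows "(\<lambda>k. H2_inner \<omega> (D k) h) \<longlonglongrightarrow> 0"
proof (rule Lim_null_comparison)
  define S where "S = (\<Sum>n. (1 + \<omega> n) * cmod (tcoef h n))"
  have "norm (of_real (\<omega> n) * tcoef (D k) n * cnj (tcoef h n)) \<le> H2_norm \<omega> (D k) * ((1 + \<omega> n) * cmod (tcoef h n))"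
    for k n
  proof -
    have w: "\<omega> n > 0" by (rule admissible_weight_pos[OF adm])
    have "norm (of_real (\<omega> n) * tcoef (D k) n * cnj (tcoef h n))
        = sqrt (\<omega> n) * (sqrt (\<omega> n) * cmod (tcoef (D k) n)) * cmod (tcoef h n)"
      using w by (simp add: norm_mult mult.assoc[symmetric])
    also have "\<dots> \<le> (1 + \<omega> n) * H2_norm \<omega> (D k) * cmod (tcoef h n)"
      using w by (intro mult_right_mono mult_mono sqrt_weight_norm_tcoef_le_H2_norm[OF adm D] sqrt_le_1_plus) auto
    finally show ?thesis by (simp add: algebra_simps)
  qed
  then have "norm (H2_inner \<omega> (D k) h) \<le> (\<Sum>n. H2_norm \<omega> (D k) * ((1 + \<omega> n) * cmod (tcoef h n)))" for k
    unfolding H2_inner_def by (rule norm_suminf_le[OF _ summable_mult[OF h]])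
  then have "norm (H2_inner \<omega> (D k) h) \<le> H2_norm \<omega> (D k) * S" for k
    unfolding S_def suminf_mult[OF h] .
  then show "\<forall>\<^sub>F k in sequentially. norm (H2_inner \<omega> (D k) h) \<le> H2_norm \<omega> (D k) * S" by simp
  show "(\<lambda>k. H2_norm \<omega> (D k) * S) \<longlonglongrightarrow> 0" using tendsto_mult_left_zero[OF lim] .
qed

lemma in_H2_cmult:
  assumes "in_H2 \<omega> f"
  shows "in_H2 \<omega> (\<lambda>z. c * f z)" "H2_norm \<omega> (\<lambda>z. c * f z) = cmod c * H2_norm \<omega> f"
proof -
  have h: "f holomorphic_on ball 0 1" and sm: "summable (\<lambda>n. \<omega> n * cmod (tcoef f n)^2)"
    using assms by (auto simp: in_H2_def)
  have "tcoef (\<lambda>z. c * f z) n = c * tcoef f n" for n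
    by (rule tcoef_cmult[OF h]) auto
  then have e: "(\<lambda>n. \<omega> n * cmod (tcoef (\<lambda>z. c * f z) n)^2) = (\<lambda>n. cmod c ^ 2 * (\<omega> n * cmod (tcoef f n)^2))"
    by (simp add: norm_mult power_mult_distrib mult.left_commute)
  show "in_H2 \<omega> (\<lambda>z. c * f z)"
    unfolding in_H2_def e using h sm by (auto intro!: holomorphic_intros summable_mult)
  show "H2_norm \<omega> (\<lambda>z. c * f z) = cmod c * H2_norm \<omega> f"
    unfolding H2_norm_def e suminf_mult[OF sm] by (simp add: real_sqrt_mult)
qed

lemma in_Hb_cmult:
  assumes "in_Hb \<omega> b G"
  shows "in_Hb \<omega> b (\<lambda>z. c * G z)"
proof -
  obtain p where G: "G holomorphic_on ball 0 1" "in_H2 \<omega> (\<lambda>z. G z * b z)"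
    and p: "\<And>k. in_H2 \<omega> (\<lambda>z. poly (p k) z * b z - G z * b z)"
      "(\<lambda>k. H2_norm \<omega> (\<lambda>z. poly (p k) z * b z - G z * b z)) \<longlonglongrightarrow> 0"
    using assms unfolding in_Hb_def by blast
  have e1: "(\<lambda>z. c * G z * b z) = (\<lambda>z. c * (G z * b z))" by (simp add: mult.assoc)
  have e2: "(\<lambda>z. poly (smult c (p k)) z * b z - c * G z * b z)
      = (\<lambda>z. c * (poly (p k) z * b z - G z * b z))" for k
    by (simp add: algebra_simps)
  show ?thesis unfolding in_Hb_def
  proof (intro conjI exI[of _ "\<lambda>k. smult c (p k)"] allI)
    show "(\<lambda>z. c * G z) holomorphic_on ball 0 1" using G(1) by (intro holomorphic_intros)
    show "in_H2 \<omega> (\<lambda>z. c * G z * b z)" unfolding e1 by (rule in_H2_cmult(1)[OF G(2)])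
    show "in_H2 \<omega> (\<lambda>z. poly (smult c (p k)) z * b z - c * G z * b z)" for k
      unfolding e2 by (rule in_H2_cmult(1)[OF p(1)])
    show "(\<lambda>k. H2_norm \<omega> (\<lambda>z. poly (smult c (p k)) z * b z - c * G z * b z)) \<longlonglongrightarrow> 0"
      unfolding e2 in_H2_cmult(2)[OF p(1)] using tendsto_mult_right_zero[OF p(2)] by simp
  qed
qed

section \<open>Dividing out zeros\<close>

lemma holomorphic_factor_zero:
  assumes "H holomorphic_on S" "open S" "H a = 0"
  obtains H' where "H' holomorphic_on S" "\<forall>z\<in>S. H z = (z - a) * H' z"
proof
  show "(\<lambda>z. if z = a then deriv H a else (H z - H a) / (z - a)) holomorphic_on S"
    by (rule pole_lemma_open[OF assms(1,2)])
qed (use assms(3) in auto)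

lemma holomorphic_factor_power:
  assumes S: "open S" and H0: "H0 holomorphic_on S" "\<forall>z\<in>S. g z = P z * H0 z"
    and vanish: "\<And>r H. r < k \<Longrightarrow> H holomorphic_on S \<Longrightarrow> \<forall>z\<in>S. g z = P z * (z - a) ^ r * H z \<Longrightarrow> H a = 0"
  obtains H where "H holomorphic_on S" "\<forall>z\<in>S. g z = P z * (z - a) ^ k * H z"
proof -
  have "\<exists>H. H holomorphic_on S \<and> (\<forall>z\<in>S. g z = P z * (z - a) ^ r * H z)" if "r \<le> k" for r
    using that
  proof (induction r)
    case 0
    then show ?case using H0 by auto
  next
    case (Suc r)
    then obtain H where H: "H holomorphic_on S" "\<forall>z\<in>S. g z = P z * (z - a) ^ r * H z" by auto
    have "H a = 0" using vanish[OF _ H] Suc.prems by simp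
    then obtain H' where H': "H' holomorphic_on S" "\<forall>z\<in>S. H z = (z - a) * H' z"
      using holomorphic_factor_zero[OF H(1) S] by blast
    then show ?case
    proof (intro exI conjI ballI)
      fix z assume "z \<in> S"
      then show "g z = P z * (z - a) ^ Suc r * H' z" using H(2) H'(2) by (simp add: mult_ac)
    qed (rule H'(1))
  qed
  then show ?thesis using that by blast
qed

section \<open>An \<open>H\<^sup>2\<^sub>\<omega>\<close>-inner analogue of a Blaschke product\<close>

locale H2_inner_analogue =
  fixes \<omega> :: "nat \<Rightarrow> real" and s d0 :: nat and zs :: "nat \<Rightarrow> complex" and m :: "nat \<Rightarrow> nat"
    and p0 :: "complex poly" and f :: "nat \<Rightarrow> complex \<Rightarrow> complex"
    and b B :: "complex \<Rightarrow> complex"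
  assumes weight: "admissible_weight \<omega>"
    and zs_0: "zs 0 = 0" and zs_disc: "\<forall>j\<le>s. zs j \<in> ball 0 1" and zs_inj: "inj_on zs {0..s}"
    and m_pos: "\<forall>j\<in>{1..s}. m j \<ge> 1"
    and b_eq_prod: "\<forall>z. b z = z ^ d0 * (\<Prod>j\<in>{1..s}. ((z - zs j) / (1 - cnj (zs j) * z)) ^ m j)"
    and degree_p0: "degree p0 = d0"
    and f_in_X: "\<forall>j\<in>{1..s}. in_X_deg \<omega> (zs j) (f j) (m j - 1)"
    and B_eq_sum: "\<forall>z. B z = poly p0 z + (\<Sum>j\<in>{1..s}. f j z)"
    and B_inner: "H2_inner_fun \<omega> B"
begin

definition Xcoef :: "nat \<Rightarrow> nat \<Rightarrow> complex" where
  "Xcoef = (SOME c. \<forall>j\<in>{1..s}. c j (m j - 1) \<noteq> 0 \<and>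
                       (\<forall>z. f j z = (\<Sum>i\<le>m j - 1. c j i * Kder \<omega> (zs j) i z)))"

lemma Xcoef:
  assumes "j \<in> {1..s}"
  shows "Xcoef j (m j - 1) \<noteq> 0" "f j = (\<lambda>z. \<Sum>i\<le>m j - 1. Xcoef j i * Kder \<omega> (zs j) i z)"
proof -
  have "\<forall>j\<in>{1..s}. \<exists>c. c (m j - 1) \<noteq> 0 \<and> (\<forall>z. f j z = (\<Sum>i\<le>m j - 1. c i * Kder \<omega> (zs j) i z))"
    using f_in_X by (auto simp: in_X_deg_def)
  then have "\<exists>c. \<forall>j\<in>{1..s}. c j (m j - 1) \<noteq> 0 \<and> (\<forall>z. f j z = (\<Sum>i\<le>m j - 1. c j i * Kder \<omega> (zs j) i z))"
    by (rule bchoice)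
  from someI_ex[OF this]
  have "\<forall>j\<in>{1..s}. Xcoef j (m j - 1) \<noteq> 0 \<and> (\<forall>z. f j z = (\<Sum>i\<le>m j - 1. Xcoef j i * Kder \<omega> (zs j) i z))"
    unfolding Xcoef_def .
  with assms show "Xcoef j (m j - 1) \<noteq> 0" "f j = (\<lambda>z. \<Sum>i\<le>m j - 1. Xcoef j i * Kder \<omega> (zs j) i z)"
    by blast+
qed

lemma zs_nonzero: "j \<in> {1..s} \<Longrightarrow> zs j \<noteq> 0"
  using zs_inj zs_0 by (metis atLeastAtMost_iff inj_on_eq_iff le0 not_one_le_zero)

lemma norm_zs_less_1: "j \<le> s \<Longrightarrow> cmod (zs j) < 1"
  using zs_disc by auto

text \<open>A radius \<open>> 1\<close> on which all \<open>K\<^sup>(\<^sup>i\<^sup>)\<^sub>z\<^sub>j\<close> and all Blaschke factors are holomorphic.\<close>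

definition rad :: real where "rad = Min (insert 2 ((\<lambda>j. 1 / cmod (zs j)) ` {1..s}))"

lemma rad_gt_1: "rad > 1"
proof -
  have "1 / cmod (zs j) > 1" if "j \<in> {1..s}" for j
    using norm_zs_less_1[of j] zs_nonzero[OF that] that by (simp add: less_divide_eq)
  then show ?thesis unfolding rad_def by (subst Min_gr_iff) auto
qed

lemma rad_le: "j \<in> {1..s} \<Longrightarrow> rad \<le> 1 / cmod (zs j)"
  unfolding rad_def by (intro Min_le) auto

lemma zero_in_ball_rad: "0 \<in> ball (0::complex) rad"
  using rad_gt_1 by simp

lemma zs_in_ball_rad: "j \<le> s \<Longrightarrow> zs j \<in> ball 0 rad"
  using norm_zs_less_1[of j] rad_gt_1 by auto

lemma ball_1_subset_rad: "ball 0 1 \<subseteq> ball (0::complex) rad"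
  using rad_gt_1 by (simp add: subset_ball)

lemma in_H2_rad: "u holomorphic_on ball 0 rad \<Longrightarrow> in_H2 \<omega> u"
  by (rule in_H2_holomorphic_ball[OF weight _ rad_gt_1])

lemma Kder_zs_holomorphic:
  assumes "j \<in> {1..s}"
  shows "Kder \<omega> (zs j) i holomorphic_on ball 0 rad"
  using holomorphic_on_Kder[OF weight zs_nonzero[OF assms]]
  by (rule holomorphic_on_subset) (use rad_le[OF assms] in \<open>intro subset_ball\<close>)

lemma f_holomorphic: "j \<in> {1..s} \<Longrightarrow> f j holomorphic_on ball 0 rad"
  by (subst Xcoef(2)) (auto intro!: holomorphic_intros Kder_zs_holomorphic)

lemma B_eq: "B = (\<lambda>z. poly p0 z + (\<Sum>j\<in>{1..s}. f j z))"
  using B_eq_sum by auto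

lemma B_holomorphic: "B holomorphic_on ball 0 rad"
  unfolding B_eq by (intro holomorphic_intros f_holomorphic) auto

lemma H2_inner_f:
  assumes j: "j \<in> {1..s}" and u: "u holomorphic_on ball 0 rad"
  shows "H2_inner \<omega> u (f j) = (\<Sum>i\<le>m j - 1. cnj (Xcoef j i) * (deriv ^^ i) u (zs j))"
proof -
  have tc: "tcoef (f j) n = (\<Sum>i\<le>m j - 1. Xcoef j i * Kder_coeff \<omega> (zs j) i n)" for n
  proof -
    have "tcoef (f j) n = (\<Sum>i\<le>m j - 1. tcoef (\<lambda>z. Xcoef j i * Kder \<omega> (zs j) i z) n)"
      by (subst Xcoef(2)[OF j], rule tcoef_sum[OF _ _ open_ball zero_in_ball_rad])
         (auto intro!: holomorphic_intros Kder_zs_holomorphic j)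
    also have "\<dots> = (\<Sum>i\<le>m j - 1. Xcoef j i * Kder_coeff \<omega> (zs j) i n)"
      by (simp add: tcoef_cmult[OF Kder_zs_holomorphic[OF j] open_ball zero_in_ball_rad]
                    tcoef_Kder[OF weight zs_nonzero[OF j]])
    finally show ?thesis .
  qed
  have "(\<lambda>n. of_real (\<omega> n) * tcoef u n * cnj (tcoef (f j) n)) =
        (\<lambda>n. \<Sum>i\<le>m j - 1. cnj (Xcoef j i) * (of_real (\<omega> n) * tcoef u n * cnj (Kder_coeff \<omega> (zs j) i n)))"
    unfolding tc by (simp add: sum_distrib_left algebra_simps)
  moreover have "\<dots> sums (\<Sum>i\<le>m j - 1. cnj (Xcoef j i) * (deriv ^^ i) u (zs j))"
    using zs_in_ball_rad[of j] j admissible_weight_pos[OF weight]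
    by (intro sums_sum sums_mult Kder_reproducing[OF u]) auto
  ultimately show ?thesis by (simp add: H2_inner_def sums_iff)
qed

lemma H2_inner_B:
  assumes u: "u holomorphic_on ball 0 rad"
  shows "H2_inner \<omega> u B = H2_inner \<omega> u (poly p0) + (\<Sum>j\<in>{1..s}. H2_inner \<omega> u (f j))"
proof -
  have u2: "in_H2 \<omega> u" and f2: "\<And>j. j \<in> {1..s} \<Longrightarrow> in_H2 \<omega> (f j)"
    using u f_holomorphic by (auto intro: in_H2_rad)
  have "H2_inner \<omega> u B = H2_inner \<omega> u (poly p0) + H2_inner \<omega> u (\<lambda>z. \<Sum>j\<in>{1..s}. f j z)"
    unfolding B_eq
    by (intro H2_inner_add_right[OF weight u2] in_H2_rad holomorphic_intros f_holomorphic) auto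
  also have "H2_inner \<omega> u (\<lambda>z. \<Sum>j\<in>{1..s}. f j z) = (\<Sum>j\<in>{1..s}. H2_inner \<omega> u (f j))"
    by (rule H2_inner_sum_right[OF weight _ u2 f2]) auto
  finally show ?thesis .
qed

lemma H2_inner_p0_factor:
  assumes v: "v holomorphic_on ball 0 rad" and uv: "\<forall>z\<in>ball 0 rad. u z = z ^ d0 * v z"
  shows "H2_inner \<omega> u (poly p0) = of_real (\<omega> d0) * v 0 * cnj (coeff p0 d0)"
proof -
  have "tcoef u n = (if n = d0 then v 0 else 0)" if "n \<le> d0" for n
    by (rule tcoef_power_mult[OF v open_ball zero_in_ball_rad]) (use uv that in auto)
  then have "(\<Sum>n\<le>d0. of_real (\<omega> n) * tcoef u n * cnj (coeff p0 n)) =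
             (\<Sum>n\<le>d0. if n = d0 then of_real (\<omega> d0) * v 0 * cnj (coeff p0 d0) else 0)"
    by (intro sum.cong) auto
  then show ?thesis unfolding H2_inner_poly_right degree_p0 by simp
qed

lemma H2_inner_p0_vanish:
  assumes v: "v holomorphic_on ball 0 rad" and uv: "\<forall>z\<in>ball 0 rad. u z = z ^ Suc d0 * v z"
  shows "H2_inner \<omega> u (poly p0) = 0"
proof -
  have "H2_inner \<omega> u (poly p0) = of_real (\<omega> d0) * (0 * v 0) * cnj (coeff p0 d0)"
    by (rule H2_inner_p0_factor[where v = "\<lambda>z. z * v z"]) (use v uv in \<open>auto intro!: holomorphic_intros\<close>)
  then show ?thesis by simp
qed

lemma H2_inner_f_factor:
  assumes j: "j \<in> {1..s}" and u: "u holomorphic_on ball 0 rad" and v: "v holomorphic_on ball 0 rad"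
    and uv: "\<forall>z\<in>ball 0 rad. u z = (z - zs j) ^ (m j - 1) * v z"
  shows "H2_inner \<omega> u (f j) = cnj (Xcoef j (m j - 1)) * (fact (m j - 1) * v (zs j))"
proof -
  have "(deriv ^^ i) u (zs j) = (if i = m j - 1 then fact (m j - 1) * v (zs j) else 0)"
    if "i \<le> m j - 1" for i
    by (rule higher_deriv_power_mult[OF v open_ball]) (use uv that j zs_in_ball_rad in auto)
  then have "(\<Sum>i\<le>m j - 1. cnj (Xcoef j i) * (deriv ^^ i) u (zs j)) =
      (\<Sum>i\<le>m j - 1. if i = m j - 1 then cnj (Xcoef j (m j - 1)) * (fact (m j - 1) * v (zs j)) else 0)"
    by (intro sum.cong) auto
  then show ?thesis using H2_inner_f[OF j u] by simp
qed

lemma H2_inner_f_vanish: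
  assumes j: "j \<in> {1..s}" and u: "u holomorphic_on ball 0 rad" and v: "v holomorphic_on ball 0 rad"
    and uv: "\<forall>z\<in>ball 0 rad. u z = (z - zs j) ^ m j * v z"
  shows "H2_inner \<omega> u (f j) = 0"
proof -
  have "m j = Suc (m j - 1)" using m_pos j by force
  then have "(z - zs j) ^ m j = (z - zs j) ^ (m j - 1) * (z - zs j)" for z
    by (metis power_Suc2)
  then have "H2_inner \<omega> u (f j) = cnj (Xcoef j (m j - 1)) * (fact (m j - 1) * ((zs j - zs j) * v (zs j)))"
    by (intro H2_inner_f_factor[OF j u, where v = "\<lambda>z. (z - zs j) * v z"])
       (use v uv in \<open>auto intro!: holomorphic_intros simp: mult_ac\<close>)
  then show ?thesis by simp
qed

lemma H2_inner_poly_mult_B: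
  assumes "poly q 0 = 0"
  shows "H2_inner \<omega> (\<lambda>z. poly q z * B z) B = 0"
proof -
  have in_H2_B: "in_H2 \<omega> (\<lambda>z. z ^ k * poly p z * B z)" for k p
    by (intro in_H2_rad holomorphic_intros B_holomorphic)
  have shifted: "H2_inner \<omega> (\<lambda>z. z ^ k * poly p z * B z) B = 0" if "k \<ge> 1" for k p
    using that
  proof (induction p arbitrary: k)
    case 0
    then show ?case by (simp add: H2_inner_def tcoef_def)
  next
    case (pCons a p)
    have e: "(\<lambda>z. z ^ k * poly (pCons a p) z * B z) = (\<lambda>z. a * (z ^ k * B z) + z ^ Suc k * poly p z * B z)"
      by (simp add: algebra_simps)
    have B2: "in_H2 \<omega> B" and k2: "in_H2 \<omega> (\<lambda>z. z ^ k * B z)"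
      by (intro in_H2_rad holomorphic_intros B_holomorphic)+
    have "H2_inner \<omega> (\<lambda>z. z ^ k * B z) B = 0"
      using B_inner pCons.prems by (simp add: H2_inner_fun_def)
    then show ?case
      unfolding e H2_inner_add_left[OF weight in_H2_cmult(1)[OF k2] in_H2_B B2] H2_inner_cmult_left[OF weight k2 B2]
      using pCons.IH[of "Suc k"] by simp
  qed
  obtain p where "q = pCons 0 p" using assms by (cases q) auto
  then show ?thesis using shifted[of 1 p] by simp
qed

definition num :: "complex \<Rightarrow> complex" where "num z = (\<Prod>i\<in>{1..s}. (z - zs i) ^ m i)"

definition den :: "complex \<Rightarrow> complex" where "den z = (\<Prod>i\<in>{1..s}. (1 - cnj (zs i) * z) ^ m i)"

lemma num_holomorphic: "num holomorphic_on S"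
  unfolding num_def by (intro holomorphic_intros)

lemma num_0: "num 0 \<noteq> 0"
  using zs_nonzero by (auto simp: num_def)

lemma num_split: "j \<in> {1..s} \<Longrightarrow> num z = (z - zs j) ^ m j * (\<Prod>i\<in>{1..s} - {j}. (z - zs i) ^ m i)"
  unfolding num_def by (subst prod.remove[of _ j]) auto

lemma den_holomorphic: "den holomorphic_on S"
  unfolding den_def by (intro holomorphic_intros)

lemma den_nonzero:
  assumes z: "z \<in> ball 0 rad"
  shows "den z \<noteq> 0"
proof -
  have "cmod (cnj (zs i) * z) < 1" if i: "i \<in> {1..s}" for i
  proof -
    have zi: "cmod (zs i) > 0" using zs_nonzero[OF i] by simp
    have "cmod (cnj (zs i) * z) < cmod (zs i) * rad" using z zi by (simp add: norm_mult)
    also have "\<dots> \<le> cmod (zs i) * (1 / cmod (zs i))" using rad_le[OF i] zi by (intro mult_left_mono) auto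
    finally show ?thesis using zi by simp
  qed
  then have "1 - cnj (zs i) * z \<noteq> 0" if "i \<in> {1..s}" for i
    using that by (metis norm_one right_minus_eq less_irrefl)
  then show ?thesis unfolding den_def by simp
qed

lemma b_eq: "b z = z ^ d0 * num z / den z"
  using b_eq_prod by (simp add: num_def den_def power_divide prod_dividef)

lemma b_holomorphic: "b holomorphic_on ball 0 rad"
proof -
  have "(\<lambda>z. z ^ d0 * num z / den z) holomorphic_on ball 0 rad"
    by (intro holomorphic_intros num_holomorphic den_holomorphic) (use den_nonzero in auto)
  then show ?thesis by (simp add: b_eq[abs_def])
qed

lemma H2_inner_B_eq_f_at_node:
  assumes j: "j \<in> {1..s}" and h: "h holomorphic_on ball 0 rad" and v: "v holomorphic_on ball 0 rad"
    and hv: "\<forall>z\<in>ball 0 rad. h z = z ^ Suc d0 * (\<Prod>i\<in>{1..s} - {j}. (z - zs i) ^ m i) * v z"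
  shows "H2_inner \<omega> h B = H2_inner \<omega> h (f j)"
proof -
  have "H2_inner \<omega> h (poly p0) = 0"
    by (rule H2_inner_p0_vanish[where v = "\<lambda>z. (\<Prod>i\<in>{1..s} - {j}. (z - zs i) ^ m i) * v z"])
       (use v hv in \<open>auto intro!: holomorphic_intros simp: mult_ac\<close>)
  moreover have "H2_inner \<omega> h (f i) = 0" if i: "i \<in> {1..s} - {j}" for i
  proof (rule H2_inner_f_vanish[OF _ h, where
        v = "\<lambda>z. z ^ Suc d0 * (\<Prod>i'\<in>{1..s} - {j} - {i}. (z - zs i') ^ m i') * v z"])
    show "i \<in> {1..s}" using i by simp
    show "(\<lambda>z. z ^ Suc d0 * (\<Prod>i'\<in>{1..s} - {j} - {i}. (z - zs i') ^ m i') * v z) holomorphic_on ball 0 rad"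
      by (intro holomorphic_intros v)
    have "(\<Prod>i'\<in>{1..s} - {j}. (z - zs i') ^ m i') = (z - zs i) ^ m i * (\<Prod>i'\<in>{1..s} - {j} - {i}. (z - zs i') ^ m i')"
      for z using i by (subst prod.remove[of _ i]) auto
    then show "\<forall>z\<in>ball 0 rad. h z = (z - zs i) ^ m i *
        (z ^ Suc d0 * (\<Prod>i'\<in>{1..s} - {j} - {i}. (z - zs i') ^ m i') * v z)"
      using hv by (simp add: mult_ac)
  qed
  moreover have "(\<Sum>i\<in>{1..s}. H2_inner \<omega> h (f i)) = H2_inner \<omega> h (f j) + (\<Sum>i\<in>{1..s} - {j}. H2_inner \<omega> h (f i))"
    using j by (simp add: sum.remove)
  ultimately show ?thesis using H2_inner_B[OF h] by simp
qed

text \<open>The test function \<open>q B\<close> below has a zero of order exactly \<open>m\<^sub>j - 1\<close> at \<open>z\<^sub>j\<close> and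
  zeros of full order at \<open>0\<close> and at the other \<open>z\<^sub>i\<close>, so that \<open>\<langle>q B, B\<rangle> = 0\<close> only sees the
  value of the quotient at \<open>z\<^sub>j\<close>.\<close>

lemma quotient_vanishes_at_zs:
  assumes T: "T \<subseteq> {1..s}" and j: "j \<in> {1..s}" "j \<notin> T" and r: "r < m j"
    and H: "H holomorphic_on ball 0 rad"
    and B_fac: "\<forall>z\<in>ball 0 rad. B z = (\<Prod>i\<in>T. (z - zs i) ^ m i) * (z - zs j) ^ r * H z"
  shows "H (zs j) = 0"
proof -
  define U where "U = {1..s} - {j}"
  define q where "q = monom 1 (Suc d0) * [:- zs j, 1:] ^ (m j - 1 - r) * (\<Prod>i\<in>U. [:- zs i, 1:] ^ m i)"
  have poly_q: "poly q z = z ^ Suc d0 * (z - zs j) ^ (m j - 1 - r) * (\<Prod>i\<in>U. (z - zs i) ^ m i)" for z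
    by (simp add: q_def poly_monom poly_prod)
  define h where "h z = poly q z * B z" for z
  have h: "h holomorphic_on ball 0 rad" unfolding h_def by (intro holomorphic_intros B_holomorphic)
  define w where "w z = z ^ Suc d0 * (\<Prod>i\<in>U. (z - zs i) ^ m i) * (\<Prod>i\<in>T. (z - zs i) ^ m i) * H z" for z
  have "0 = H2_inner \<omega> h B"
    unfolding h_def by (rule H2_inner_poly_mult_B[symmetric]) (simp add: poly_q)
  also have "\<dots> = H2_inner \<omega> h (f j)"
    by (rule H2_inner_B_eq_f_at_node[OF j(1) h, where v = "\<lambda>z. (z - zs j) ^ (m j - 1 - r) * B z"])
       (auto intro!: holomorphic_intros B_holomorphic simp: h_def poly_q U_def mult_ac)
  also have "\<dots> = cnj (Xcoef j (m j - 1)) * (fact (m j - 1) * w (zs j))"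
  proof (rule H2_inner_f_factor[OF j(1) h])
    show "w holomorphic_on ball 0 rad" unfolding w_def by (intro holomorphic_intros H)
    show "\<forall>z\<in>ball 0 rad. h z = (z - zs j) ^ (m j - 1) * w z"
    proof
      fix z :: complex assume z: "z \<in> ball 0 rad"
      have "h z = ((z - zs j) ^ (m j - 1 - r) * (z - zs j) ^ r) * w z"
        using B_fac z by (simp add: h_def poly_q w_def mult_ac)
      also have "(z - zs j) ^ (m j - 1 - r) * (z - zs j) ^ r = (z - zs j) ^ (m j - 1)"
        using r by (simp flip: power_add)
      finally show "h z = (z - zs j) ^ (m j - 1) * w z" .
    qed
  qed
  finally have "w (zs j) = 0" using Xcoef(1)[OF j(1)] by simp
  moreover have "zs j - zs i \<noteq> 0" if "i \<in> U \<union> T" for i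
    using that zs_inj j T unfolding U_def inj_on_def by fastforce
  moreover have "finite U" "finite T" using T finite_subset by (auto simp: U_def)
  ultimately show ?thesis using zs_nonzero[OF j(1)] by (simp add: w_def)
qed

lemma quotient_vanishes_at_0:
  assumes r: "r < d0" and H: "H holomorphic_on ball 0 rad"
    and B_fac: "\<forall>z\<in>ball 0 rad. B z = num z * z ^ r * H z"
  shows "H 0 = 0"
proof -
  define h where "h z = z ^ (d0 - r) * B z" for z
  have h: "h holomorphic_on ball 0 rad" unfolding h_def by (intro holomorphic_intros B_holomorphic)
  have "0 = H2_inner \<omega> h B"
    unfolding h_def using B_inner r by (auto simp: H2_inner_fun_def)
  also have "\<dots> = H2_inner \<omega> h (poly p0)"
  proof -
    have "H2_inner \<omega> h (f j) = 0" if j: "j \<in> {1..s}" for j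
      by (rule H2_inner_f_vanish[OF j h, where v = "\<lambda>z. z ^ (d0 - r) * (\<Prod>i\<in>{1..s} - {j}. (z - zs i) ^ m i) * z ^ r * H z"])
         (use B_fac in \<open>auto intro!: holomorphic_intros H simp: h_def num_split[OF j] mult_ac\<close>)
    then show ?thesis using H2_inner_B[OF h] by simp
  qed
  also have "\<dots> = of_real (\<omega> d0) * (num 0 * H 0) * cnj (coeff p0 d0)"
  proof (rule H2_inner_p0_factor[where v = "\<lambda>z. num z * H z"])
    show "(\<lambda>z. num z * H z) holomorphic_on ball 0 rad" by (intro holomorphic_intros num_holomorphic H)
    have "z ^ (d0 - r) * z ^ r = z ^ d0" for z :: complex using r by (simp flip: power_add)
    then show "\<forall>z\<in>ball 0 rad. h z = z ^ d0 * (num z * H z)"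
      using B_fac by (auto simp: h_def)
  qed
  finally have "of_real (\<omega> d0) * (num 0 * H 0) * cnj (coeff p0 d0) = 0" by simp
  moreover have "coeff p0 d0 \<noteq> 0" using degree_p0 r leading_coeff_0_iff[of p0] by auto
  ultimately show ?thesis using num_0 admissible_weight_pos[OF weight, of d0] by simp
qed

lemma B_divisible_num_part:
  assumes "T \<subseteq> {1..s}"
  shows "\<exists>H. H holomorphic_on ball 0 rad \<and> (\<forall>z\<in>ball 0 rad. B z = (\<Prod>i\<in>T. (z - zs i) ^ m i) * H z)"
proof -
  have "finite T" using assms finite_subset by blast
  then show ?thesis using assms
  proof (induction T rule: finite_subset_induct')
    case empty
    then show ?case using B_holomorphic by auto
  next
    case (insert j T)
    then obtain H where H: "H holomorphic_on ball 0 rad" "\<forall>z\<in>ball 0 rad. B z = (\<Prod>i\<in>T. (z - zs i) ^ m i) * H z"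
      by blast
    have vanish: "H' (zs j) = 0" if "r < m j" "H' holomorphic_on ball 0 rad"
      "\<forall>z\<in>ball 0 rad. B z = (\<Prod>i\<in>T. (z - zs i) ^ m i) * (z - zs j) ^ r * H' z" for r H'
      by (rule quotient_vanishes_at_zs[OF insert.hyps(3,2,4) that])
    obtain H' where "H' holomorphic_on ball 0 rad"
        "\<forall>z\<in>ball 0 rad. B z = (\<Prod>i\<in>T. (z - zs i) ^ m i) * (z - zs j) ^ m j * H' z"
      by (rule holomorphic_factor_power[OF open_ball H vanish])
    then show ?case using insert.hyps(1,4) by (intro exI[of _ H']) (auto simp: mult_ac)
  qed
qed

lemma B_factorization: "\<exists>H. H holomorphic_on ball 0 rad \<and> (\<forall>z\<in>ball 0 rad. B z = z ^ d0 * num z * H z)"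
proof -
  obtain H0 where H0: "H0 holomorphic_on ball 0 rad" "\<forall>z\<in>ball 0 rad. B z = num z * H0 z"
    using B_divisible_num_part[of "{1..s}"] unfolding num_def by auto
  have vanish: "H 0 = 0" if "r < d0" "H holomorphic_on ball 0 rad"
    "\<forall>z\<in>ball 0 rad. B z = num z * (z - 0) ^ r * H z" for r H
    using quotient_vanishes_at_0 that by simp
  obtain H where "H holomorphic_on ball 0 rad" "\<forall>z\<in>ball 0 rad. B z = num z * (z - 0) ^ d0 * H z"
    by (rule holomorphic_factor_power[OF open_ball H0 vanish])
  then show ?thesis by (intro exI[of _ H]) (auto simp: mult_ac)
qed

definition B_quotient :: "complex \<Rightarrow> complex" where
  "B_quotient = (SOME H. H holomorphic_on ball 0 rad \<and> (\<forall>z\<in>ball 0 rad. B z = z ^ d0 * num z * H z))"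

lemma B_quotient:
  "B_quotient holomorphic_on ball 0 rad" "\<forall>z\<in>ball 0 rad. B z = z ^ d0 * num z * B_quotient z"
  using someI_ex[OF B_factorization] unfolding B_quotient_def by blast+

definition F :: "complex \<Rightarrow> complex" where "F z = B_quotient z * den z"

lemma F_holomorphic: "F holomorphic_on ball 0 rad"
  unfolding F_def by (intro holomorphic_intros B_quotient(1) den_holomorphic)

lemma F_mult_b: "z \<in> ball 0 rad \<Longrightarrow> F z * b z = B z"
  using den_nonzero[of z] B_quotient(2) by (simp add: F_def b_eq field_simps)

lemma in_Hb_F: "in_Hb \<omega> b F"
proof -
  define r where "r = (1 + rad) / 2"
  have r: "0 < r" "1 < r" "r < rad" using rad_gt_1 by (auto simp: r_def)
  obtain E where E: "E \<longlonglongrightarrow> 0"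
    "\<And>k z. cmod z \<le> r \<Longrightarrow> cmod (poly (\<Sum>n\<le>k. monom (tcoef F n) n) z - F z) \<le> E k"
    using Taylor_poly_uniform_approx[OF F_holomorphic r(1,3)] by blast
  obtain M where M: "\<And>z. cmod z \<le> r \<Longrightarrow> cmod (b z) \<le> M"
    using holomorphic_bounded_on_cball[OF b_holomorphic r(3)] by blast
  have "cmod (poly (\<Sum>n\<le>k. monom (tcoef F n) n) z * b z - F z * b z) \<le> E k * M" if "cmod z = r" for k z
    using E(2)[of z k] M[of z] that
    by (auto simp: norm_mult simp flip: left_diff_distrib intro!: mult_mono order_trans[OF norm_ge_zero])
  moreover have "(\<lambda>k. E k * M) \<longlonglongrightarrow> 0" using tendsto_mult_left_zero[OF E(1)] .
  ultimately have "(\<lambda>k. H2_norm \<omega> (\<lambda>z. poly (\<Sum>n\<le>k. monom (tcoef F n) n) z * b z - F z * b z)) \<longlonglongrightarrow> 0"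
    by (intro H2_norm_tendsto_0_uniform[OF weight _ r(2,3)]) (auto intro!: holomorphic_intros F_holomorphic b_holomorphic)
  moreover have "F holomorphic_on ball 0 1"
    using F_holomorphic ball_1_subset_rad by (rule holomorphic_on_subset)
  ultimately show ?thesis
    unfolding in_Hb_def
    by (intro conjI exI[of _ "\<lambda>k. \<Sum>n\<le>k. monom (tcoef F n) n"] allI in_H2_rad holomorphic_intros
        F_holomorphic b_holomorphic)
qed

definition alpha :: complex where "alpha = H2_inner \<omega> b B"

lemma H2_inner_poly_mult_b: "H2_inner \<omega> (\<lambda>z. poly p z * b z) B = poly p 0 * alpha"
proof -
  have "(\<lambda>z. poly p z - poly p 0) holomorphic_on ball 0 rad" by (intro holomorphic_intros)
  then obtain q where q: "q holomorphic_on ball 0 rad" "\<forall>z\<in>ball 0 rad. poly p z - poly p 0 = (z - 0) * q z"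
    by (rule holomorphic_factor_zero[OF _ open_ball]) simp
  define u where "u z = (poly p z - poly p 0) * b z" for z
  have u: "u holomorphic_on ball 0 rad" unfolding u_def by (intro holomorphic_intros b_holomorphic)
  have "H2_inner \<omega> u (poly p0) = 0"
    by (rule H2_inner_p0_vanish[where v = "\<lambda>z. q z * (num z / den z)"])
       (use q den_nonzero in \<open>auto intro!: holomorphic_intros num_holomorphic den_holomorphic
          simp: u_def b_eq mult_ac\<close>)
  moreover have "H2_inner \<omega> u (f j) = 0" if j: "j \<in> {1..s}" for j
    by (rule H2_inner_f_vanish[OF j u, where
          v = "\<lambda>z. (poly p z - poly p 0) * z ^ d0 * (\<Prod>i\<in>{1..s} - {j}. (z - zs i) ^ m i) / den z"])
       (use den_nonzero in \<open>auto intro!: holomorphic_intros den_holomorphic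
          simp: u_def b_eq num_split[OF j] mult_ac\<close>)
  ultimately have "H2_inner \<omega> u B = 0" using H2_inner_B[OF u] by simp
  moreover have "(\<lambda>z. poly p z * b z) = (\<lambda>z. u z + poly p 0 * b z)"
    by (simp add: u_def algebra_simps)
  moreover have "in_H2 \<omega> u" "in_H2 \<omega> b" "in_H2 \<omega> B"
    using u b_holomorphic B_holomorphic by (auto intro: in_H2_rad)
  ultimately show ?thesis
    by (simp add: H2_inner_add_left[OF weight] in_H2_cmult H2_inner_cmult_left[OF weight] alpha_def)
qed

text \<open>The \<open>d\<^sub>0\<close>-th Taylor coefficient of \<open>(p\<^sub>k - G) b\<close> is \<open>(p\<^sub>k(0) - G(0)) num(0) / den(0)\<close>.\<close>

lemma tendsto_poly_0_if_Hb_approx: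
  assumes G: "G holomorphic_on ball 0 1"
    and D: "\<And>k. in_H2 \<omega> (\<lambda>z. poly (p k) z * b z - G z * b z)"
      "(\<lambda>k. H2_norm \<omega> (\<lambda>z. poly (p k) z * b z - G z * b z)) \<longlonglongrightarrow> 0"
  shows "(\<lambda>k. poly (p k) 0) \<longlonglongrightarrow> G 0"
proof -
  define D where "D k z = poly (p k) z * b z - G z * b z" for k z
  have "tcoef (D k) d0 = (if d0 = d0 then (poly (p k) 0 - G 0) * (num 0 / den 0) else 0)" for k
  proof (rule tcoef_power_mult[where u = "\<lambda>z. (poly (p k) z - G z) * (num z / den z)", OF _ open_ball])
    show "(\<lambda>z. (poly (p k) z - G z) * (num z / den z)) holomorphic_on ball 0 1"
      using den_nonzero ball_1_subset_rad
      by (intro holomorphic_intros G num_holomorphic den_holomorphic) auto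
    show "D k z = z ^ d0 * ((poly (p k) z - G z) * (num z / den z))" for z
      unfolding D_def b_eq by (simp add: diff_divide_distrib[symmetric] algebra_simps)
  qed auto
  then have tcD: "tcoef (D k) d0 = (poly (p k) 0 - G 0) * (num 0 / den 0)" for k
    by (simp only: simp_thms if_True)
  have "(\<lambda>k. tcoef (D k) d0) \<longlonglongrightarrow> 0"
    using D unfolding D_def by (intro tcoef_tendsto_0[OF weight])
  then have "(\<lambda>k. (poly (p k) 0 - G 0) * (num 0 / den 0)) \<longlonglongrightarrow> 0"
    unfolding tcD .
  moreover have \<beta>: "num 0 / den 0 \<noteq> 0" using num_0 den_nonzero[OF zero_in_ball_rad] by simp
  ultimately have "(\<lambda>k. (poly (p k) 0 - G 0) * (num 0 / den 0) / (num 0 / den 0)) \<longlonglongrightarrow> 0 / (num 0 / den 0)"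
    by (intro tendsto_divide tendsto_const)
  then have "(\<lambda>k. poly (p k) 0 - G 0) \<longlonglongrightarrow> 0" using \<beta> by simp
  then show ?thesis by (rule LIM_zero_cancel)
qed

lemma H2_inner_Hb_mult_b:
  assumes "in_Hb \<omega> b G"
  shows "H2_inner \<omega> (\<lambda>z. G z * b z) B = G 0 * alpha"
proof -
  obtain p where G: "G holomorphic_on ball 0 1" "in_H2 \<omega> (\<lambda>z. G z * b z)"
    and D: "\<And>k. in_H2 \<omega> (\<lambda>z. poly (p k) z * b z - G z * b z)"
      "(\<lambda>k. H2_norm \<omega> (\<lambda>z. poly (p k) z * b z - G z * b z)) \<longlonglongrightarrow> 0"
    using assms unfolding in_Hb_def by blast
  define D where "D k z = poly (p k) z * b z - G z * b z" for k z
  have B2: "in_H2 \<omega> B" using B_holomorphic by (rule in_H2_rad)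
  have split: "H2_inner \<omega> (\<lambda>z. G z * b z) B = poly (p k) 0 * alpha - H2_inner \<omega> (D k) B" for k
  proof -
    have "H2_inner \<omega> (\<lambda>z. G z * b z) B = H2_inner \<omega> (\<lambda>z. poly (p k) z * b z - D k z) B"
      by (simp add: D_def)
    also have "\<dots> = H2_inner \<omega> (\<lambda>z. poly (p k) z * b z) B - H2_inner \<omega> (D k) B"
      using D(1) unfolding D_def
      by (intro H2_inner_diff_left[OF weight _ _ B2] in_H2_rad[of "\<lambda>z. poly (p k) z * b z"]
                holomorphic_intros b_holomorphic)
    finally show ?thesis by (simp add: H2_inner_poly_mult_b)
  qed
  have "(\<lambda>k. H2_inner \<omega> (D k) B) \<longlonglongrightarrow> 0"
    using D unfolding D_def
    by (intro H2_inner_tendsto_0_left[OF weight] holomorphic_ball_summable_tcoef(2)[OF weight B_holomorphic rad_gt_1])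
  then have "(\<lambda>k. poly (p k) 0 * alpha - H2_inner \<omega> (D k) B) \<longlonglongrightarrow> G 0 * alpha - 0"
    by (intro tendsto_intros tendsto_poly_0_if_Hb_approx[OF G(1) D])
  then show ?thesis unfolding split[symmetric] by (simp add: LIMSEQ_const_iff)
qed

lemma F_0_mult_alpha: "F 0 * alpha = 1"
proof -
  have "F 0 * alpha = H2_inner \<omega> (\<lambda>z. F z * b z) B" by (rule H2_inner_Hb_mult_b[OF in_Hb_F, symmetric])
  also have "\<dots> = H2_inner \<omega> B B"
    using ball_1_subset_rad by (intro H2_inner_cong) (auto simp: F_mult_b)
  also have "\<dots> = of_real (H2_norm \<omega> B ^ 2)"
    using H2_inner_self[OF weight in_H2_rad[OF B_holomorphic]] .
  also have "\<dots> = 1" using B_inner by (simp add: H2_inner_fun_def)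
  finally show ?thesis .
qed

lemma kernel_at_0: "is_Hb_kernel \<omega> b 0 (\<lambda>z. F z / cnj alpha)"
  unfolding is_Hb_kernel_def
proof (intro conjI allI impI)
  show "in_Hb \<omega> b (\<lambda>z. F z / cnj alpha)"
    using in_Hb_cmult[OF in_Hb_F, of "1 / cnj alpha"] by simp
  fix G assume G: "in_Hb \<omega> b G"
  have "Hb_inner \<omega> b G (\<lambda>z. F z / cnj alpha) = H2_inner \<omega> (\<lambda>z. G z * b z) (\<lambda>z. (1 / cnj alpha) * B z)"
    unfolding Hb_inner_def using ball_1_subset_rad
    by (intro H2_inner_cong) (auto simp flip: F_mult_b)
  also have "\<dots> = cnj (1 / cnj alpha) * H2_inner \<omega> (\<lambda>z. G z * b z) B"
    by (rule H2_inner_cmult_right[OF weight _ in_H2_rad[OF B_holomorphic]]) (use G in \<open>simp add: in_Hb_def\<close>)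
  also have "\<dots> = cnj (1 / cnj alpha) * (G 0 * alpha)"
    by (simp only: H2_inner_Hb_mult_b[OF G])
  also have "\<dots> = G 0" using F_0_mult_alpha by (auto simp: field_simps)
  finally show "Hb_inner \<omega> b G (\<lambda>z. F z / cnj alpha) = G 0" .
qed

end

theorem mainTheorem10:
  fixes \<omega> :: "nat \<Rightarrow> real" and s d0 :: nat and zs :: "nat \<Rightarrow> complex" and m :: "nat \<Rightarrow> nat"
    and p0 :: "complex poly" and f :: "nat \<Rightarrow> complex \<Rightarrow> complex"
    and b B :: "complex \<Rightarrow> complex"
  assumes "admissible_weight \<omega>"
    and "zs 0 = 0" and "\<forall>j\<le>s. zs j \<in> ball 0 1" and "inj_on zs {0..s}"
    and "\<forall>j\<in>{1..s}. m j \<ge> 1"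
    and "\<forall>z. b z = z ^ d0 * (\<Prod>j\<in>{1..s}. ((z - zs j) / (1 - cnj (zs j) * z)) ^ m j)"
    and "degree p0 = d0"
    and "\<forall>j\<in>{1..s}. in_X_deg \<omega> (zs j) (f j) (m j - 1)"
    and "\<forall>z. B z = poly p0 z + (\<Sum>j\<in>{1..s}. f j z)"
    and "H2_inner_fun \<omega> B"
  shows "\<exists>F. F holomorphic_on ball 0 1 \<and> (\<forall>z\<in>ball 0 1. b z \<noteq> 0 \<longrightarrow> F z = B z / b z) \<and>
           in_Hb \<omega> b F \<and>
           (\<exists>k c. is_Hb_kernel \<omega> b 0 k \<and> (\<forall>z\<in>ball 0 1. F z = c * k z))"
proof -
  interpret H2_inner_analogue \<omega> s d0 zs m p0 f b B
    by unfold_locales (rule assms)+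
  show ?thesis
  proof (intro exI conjI ballI impI)
    show "F holomorphic_on ball 0 1" using F_holomorphic ball_1_subset_rad by (rule holomorphic_on_subset)
    show "in_Hb \<omega> b F" by (rule in_Hb_F)
    show "is_Hb_kernel \<omega> b 0 (\<lambda>z. F z / cnj alpha)" by (rule kernel_at_0)
    show "F z = B z / b z" if "z \<in> ball 0 1" "b z \<noteq> 0" for z
      using F_mult_b[of z] ball_1_subset_rad that by (auto simp: field_simps)
    show "F z = cnj alpha * (F z / cnj alpha)" for z
      using F_0_mult_alpha by auto
  qed
qed

end
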